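(* Let $p$ be a prime and write $F_{BP}(x,y)=\sum_{i,j}\alpha_{ij}x^iy^j$. For all integers $i,j\ge0$ with $i+j\ge1$, $$\alpha_{ij}=\sum_{\substack{(\nu_1,\nu_2,\dots)\\ \sum_{r\ge1}(p^r-1)\nu_r=i+j-1}}\ \sum_{\substack{i_0+\sum_{r\ge1}p^r i_r=i\\ j_0+\sum_{r\ge1}p^rj_r=j\\ i_r+j_r+k_r=\nu_r\ (r\ge1)}}(-1)^{\sum_{r\ge1}k_r}\frac{\bigl(i_0+j_0+\sum_{r\ge1}(i_r+j_r+k_r)-1\bigr)!}{i_0!\,j_0!\,\prod_{r\ge1}i_r!\,j_r!\,k_r!}\ \prod_{r\ge1}l_r^{\nu_r},$$ where all $\nu_r,i_r,j_r,k_r$ range over nonnegative integers (finitely many nonzero). In particular $\alpha_{ij}=0$ unless $i+j-1$ is divisible by $p-1$.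
   Context: $BP_*=\mathbb{Z}_{(p)}[v_1,v_2,\dots]$, $|v_n|=2(p^n-1)$, is the coefficient ring of Brown–Peterson cohomology ($v_n$ the Hazewinkel generators), and $F_{BP}$ is its universal $p$-typical formal group law, with logarithm $\log_{BP}(x)=x+l_1x^p+l_2x^{p^2}+\cdots$, $l_n\in BP_*\otimes\mathbb{Q}$, so that $F_{BP}(x,y)=\log_{BP}^{-1}(\log_{BP}(x)+\log_{BP}(y))$. The $l_n$ satisfy $p\,l_n=v_n+v_{n-1}^{p}l_1+\cdots+v_1^{p^{n-1}}l_{n-1}$. The $l_n$ are algebraically independent over $\mathbb{Q}$ and $BP_*\otimes\mathbb{Q}=\mathbb{Q}[l_1,l_2,\dots]$. *)

theory Defs
  imports "HOL-Computational_Algebra.Primes"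
begin

text \<open>Formal power series in two variables x, y over a ring, represented by their
coefficient functions: f m n is the coefficient of x^m y^n.\<close>

definition bs_mult :: "(nat \<Rightarrow> nat \<Rightarrow> 'a::comm_ring_1) \<Rightarrow> (nat \<Rightarrow> nat \<Rightarrow> 'a) \<Rightarrow> nat \<Rightarrow> nat \<Rightarrow> 'a" where
  "bs_mult f g = (\<lambda>m n. \<Sum>a\<le>m. \<Sum>b\<le>n. f a b * g (m - a) (n - b))"

fun bs_pow :: "(nat \<Rightarrow> nat \<Rightarrow> 'a::comm_ring_1) \<Rightarrow> nat \<Rightarrow> nat \<Rightarrow> nat \<Rightarrow> 'a" where
  "bs_pow f 0 = (\<lambda>m n. if m = 0 \<and> n = 0 then 1 else 0)"
| "bs_pow f (Suc k) = bs_mult f (bs_pow f k)"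

text \<open>Coefficients of the p-typical logarithm log(x) = x + sum_{r>=1} l_r x^(p^r).\<close>

definition log_coeff :: "nat \<Rightarrow> (nat \<Rightarrow> 'a::comm_ring_1) \<Rightarrow> nat \<Rightarrow> 'a" where
  "log_coeff p l k = (if k = 1 then 1 else if (\<exists>r\<ge>1. k = p ^ r) then l (THE r. r \<ge> 1 \<and> k = p ^ r) else 0)"

text \<open>Coefficient of x^m y^n in log(F(x,y)) = F + sum_{r>=1} l_r F^(p^r), for F with
zero constant term.  For such F, F^(p^r) has no monomials of total degree < p^r,
and p^r > m + n whenever r > m + n, so the sum over r is finite.\<close>

definition log_of_bs :: "nat \<Rightarrow> (nat \<Rightarrow> 'a::comm_ring_1) \<Rightarrow> (nat \<Rightarrow> nat \<Rightarrow> 'a) \<Rightarrow> nat \<Rightarrow> nat \<Rightarrow> 'a" where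
  "log_of_bs p l F = (\<lambda>m n. F m n + (\<Sum>r\<in>{1..m+n}. l r * bs_pow F (p ^ r) m n))"

definition log_sum :: "nat \<Rightarrow> (nat \<Rightarrow> 'a::comm_ring_1) \<Rightarrow> nat \<Rightarrow> nat \<Rightarrow> 'a" where
  "log_sum p l = (\<lambda>m n. (if n = 0 then log_coeff p l m else 0) + (if m = 0 then log_coeff p l n else 0))"

text \<open>The formal group law F(x,y) = log^{-1}(log x + log y): the unique bivariate power
series with zero constant term satisfying log(F(x,y)) = log x + log y.
FBP_coeff p l i j is alpha_ij.\<close>

definition FBP_coeff :: "nat \<Rightarrow> (nat \<Rightarrow> 'a::field_char_0) \<Rightarrow> nat \<Rightarrow> nat \<Rightarrow> 'a" where
  "FBP_coeff p l = (THE F. F 0 0 = 0 \<and> log_of_bs p l F = log_sum p l)"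

end

theory Submission
  imports Defs "HOL-Computational_Algebra.Formal_Power_Series"
begin

(*
  1. A bivariate series is identified with a power series in y over power series in x, so that
     bs_mult/bs_pow become ring operations.  Substituting such a series S with S(0,0) = 0 into a
     univariate series h gives a bivariate series h(S); this is multiplicative and compatible
     with composition.  Hence F = g(log x + log y), g the compositional inverse of log.
  2. Lagrange inversion expresses n g_n as a coefficient of (x / log x)^n; the negative binomial
     series and the multinomial theorem turn it into a sum over multi-indices K.
  3. By the binomial and multinomial theorems the coefficient of x^i y^j in (log x + log y)^n is a
     sum over pairs (k1, k2) of multi-indices recording which monomials of log x and log y occur.
  4. Multiplying the two expansions, the factorials telescope; a bijective reindexing
     (k1 = (i0, I), k2 = (j0, J), nu = I + J + K) turns the resulting finite sum into the sum of
     the theorem.  The divisibility statement holds because p - 1 divides every p^r - 1.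
*)

unbundle fps_syntax

section \<open>Bivariate power series as iterated power series\<close>

definition bs_fps :: "(nat \<Rightarrow> nat \<Rightarrow> 'a::comm_ring_1) \<Rightarrow> 'a fps fps" where
  "bs_fps f = Abs_fps (\<lambda>n. Abs_fps (\<lambda>m. f m n))"

lemma bs_fps_nth [simp]: "bs_fps f $ n $ m = f m n"
  by (simp add: bs_fps_def)

lemma bs_fps_inj: "bs_fps f = bs_fps g \<Longrightarrow> f = g"
  by (metis bs_fps_nth ext)

lemma bs_fps_mult: "bs_fps (bs_mult f g) = bs_fps f * bs_fps g"
proof (rule fps_ext, rule fps_ext)
  fix n m
  have "(bs_fps f * bs_fps g) $ n $ m = (\<Sum>b=0..n. (bs_fps f $ b * bs_fps g $ (n - b)) $ m)"
    by (simp add: fps_mult_nth fps_sum_nth)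
  also have "\<dots> = (\<Sum>b=0..n. \<Sum>a=0..m. f a b * g (m - a) (n - b))"
    by (simp add: fps_mult_nth)
  also have "\<dots> = bs_mult f g m n"
    unfolding bs_mult_def atLeast0AtMost by (rule sum.swap)
  finally show "bs_fps (bs_mult f g) $ n $ m = (bs_fps f * bs_fps g) $ n $ m" by simp
qed

lemma bs_fps_one: "bs_fps (\<lambda>m n. if m = 0 \<and> n = 0 then 1 else 0) = 1"
  by (rule fps_ext, rule fps_ext) (auto simp: fps_one_nth)

lemma bs_fps_pow: "bs_fps (bs_pow f k) = bs_fps f ^ k"
  by (induction k) (simp_all add: bs_fps_one bs_fps_mult)

lemma bs_mult_one: "bs_mult f (\<lambda>m n. if m = 0 \<and> n = 0 then 1 else 0) = f"
  by (rule bs_fps_inj) (simp add: bs_fps_mult bs_fps_one)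

lemma bs_mult_cong:
  assumes "\<And>a b. a \<le> m \<Longrightarrow> b \<le> n \<Longrightarrow> f a b = f' a b"
      and "\<And>a b. a \<le> m \<Longrightarrow> b \<le> n \<Longrightarrow> g a b = g' a b"
  shows "bs_mult f g m n = bs_mult f' g' m n"
  unfolding bs_mult_def using assms by (intro sum.cong refl) auto

lemma bs_pow_low_degree:
  assumes "S 0 0 = 0" and "m + n < k"
  shows "bs_pow S k m n = 0"
  using assms(2)
proof (induction k arbitrary: m n)
  case (Suc k)
  have "S a b * bs_pow S k (m - a) (n - b) = 0" if "a \<le> m" "b \<le> n" for a b
  proof (cases "a = 0 \<and> b = 0")
    case True then show ?thesis using assms(1) by simp
  next
    case False
    then have "(m - a) + (n - b) < k" using Suc.prems that by linarith
    then show ?thesis using Suc.IH by simp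
  qed
  then show ?case by (simp add: bs_mult_def)
qed simp

section \<open>Substituting a bivariate series into a univariate one\<close>

text \<open>For S without constant term, h(S) = sum_k h_k S^k; by the previous lemma only the terms
  with k at most m + n contribute to the coefficient of x^m y^n.\<close>

definition subst_bs :: "'a::comm_ring_1 fps \<Rightarrow> (nat \<Rightarrow> nat \<Rightarrow> 'a) \<Rightarrow> nat \<Rightarrow> nat \<Rightarrow> 'a" where
  "subst_bs h S = (\<lambda>m n. \<Sum>k\<le>m+n. h$k * bs_pow S k m n)"

lemma subst_bs_trunc:
  assumes "S 0 0 = 0" "m + n \<le> N"
  shows "subst_bs h S m n = (\<Sum>k\<le>N. h$k * bs_pow S k m n)"
  unfolding subst_bs_def
  by (rule sum.mono_neutral_left) (use assms bs_pow_low_degree[of S] in auto)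

lemma subst_bs_00: "subst_bs h S 0 0 = h $ 0"
  by (simp add: subst_bs_def)

lemma bs_fps_sum:
  "bs_fps (\<lambda>m n. \<Sum>k\<in>A. c k * F k m n) = (\<Sum>k\<in>A. fps_const (fps_const (c k)) * bs_fps (F k))"
  by (rule fps_ext, rule fps_ext) (simp add: fps_sum_nth)

text \<open>Substitution is multiplicative: after truncating both factors at N = m + n, the product
  is computed in 'a fps fps, and the terms S^(k1+k2) with k1 + k2 > N do not reach x^m y^n.\<close>

lemma subst_bs_mult:
  assumes S0: "S 0 0 = 0"
  shows "subst_bs (h1 * h2) S = bs_mult (subst_bs h1 S) (subst_bs h2 S)"
proof (intro ext)
  fix m n :: nat
  define N where "N = m + n"
  let ?P = "\<lambda>k. bs_pow S k m n"
  let ?T = "\<lambda>h. (\<lambda>a b. \<Sum>k\<le>N. h$k * bs_pow S k a b)"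
  have "bs_mult (subst_bs h1 S) (subst_bs h2 S) m n = bs_mult (?T h1) (?T h2) m n"
    by (intro bs_mult_cong subst_bs_trunc[of S, OF S0]) (auto simp: N_def)
  also have "\<dots> = (bs_fps (?T h1) * bs_fps (?T h2)) $ n $ m"
    by (simp flip: bs_fps_mult)
  also have "bs_fps (?T h1) * bs_fps (?T h2)
      = (\<Sum>k1\<le>N. \<Sum>k2\<le>N. fps_const (fps_const (h1$k1 * h2$k2)) * bs_fps (bs_pow S (k1+k2)))"
    by (simp add: bs_fps_sum sum_product bs_fps_pow power_add algebra_simps)
  also have "\<dots> $ n $ m = (\<Sum>k1\<le>N. \<Sum>k2\<le>N. h1$k1 * h2$k2 * ?P (k1 + k2))"
    by (simp add: fps_sum_nth)
  also have "\<dots> = (\<Sum>(k1,k2)\<in>{..N}\<times>{..N}. h1$k1 * h2$k2 * ?P (k1 + k2))"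
    by (simp add: sum.cartesian_product)
  also have "\<dots> = (\<Sum>(k1,k2)\<in>{(k1,k2). k1 + k2 \<le> N}. h1$k1 * h2$k2 * ?P (k1 + k2))"
  proof (rule sum.mono_neutral_right)
    show "\<forall>k\<in>{..N}\<times>{..N} - {(k1,k2). k1 + k2 \<le> N}. (case k of (k1, k2) \<Rightarrow> h1$k1 * h2$k2 * ?P (k1 + k2)) = 0"
      using bs_pow_low_degree[of S, OF S0] by (auto simp: N_def) (metis mult_zero_right not_le)
  qed (auto simp: N_def)
  also have "\<dots> = (\<Sum>k=0..N. \<Sum>i=0..k. h1$i * h2$(k-i) * ?P k)"
    by (rule sum_pair_less_iff)
  also have "\<dots> = subst_bs (h1 * h2) S m n"
    by (simp add: subst_bs_def N_def fps_mult_nth sum_distrib_right atLeast0AtMost)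
  finally show "subst_bs (h1 * h2) S m n = bs_mult (subst_bs h1 S) (subst_bs h2 S) m n" by simp
qed

lemma subst_bs_pow:
  assumes "S 0 0 = 0"
  shows "subst_bs (h ^ i) S = bs_pow (subst_bs h S) i"
proof (induction i)
  case 0
  have "subst_bs 1 S m n = (\<Sum>k\<in>{0}. 1$k * bs_pow S k m n)" for m n
    unfolding subst_bs_def by (intro sum.mono_neutral_right) auto
  then show ?case by auto
qed (simp add: subst_bs_mult[of S, OF assms])

lemma subst_bs_X:
  assumes "S 0 0 = 0"
  shows "subst_bs fps_X S = S"
proof (intro ext)
  fix m n :: nat
  show "subst_bs fps_X S m n = S m n"
  proof (cases "m + n = 0")
    case True then show ?thesis using assms by (simp add: subst_bs_def)
  next
    case False
    then have "subst_bs fps_X S m n = (\<Sum>k\<in>{1}. fps_X$k * bs_pow S k m n)"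
      unfolding subst_bs_def by (intro sum.mono_neutral_right) (auto simp: fps_X_def)
    then show ?thesis by (simp add: bs_mult_one)
  qed
qed

lemma subst_bs_compose:
  assumes S0: "S 0 0 = 0" and g0: "g $ 0 = 0"
  shows "subst_bs (h oo g) S = subst_bs h (subst_bs g S)"
proof (intro ext)
  fix m n :: nat
  define N where "N = m + n"
  let ?P = "\<lambda>k. bs_pow S k m n"
  have "subst_bs (h oo g) S m n = (\<Sum>k\<le>N. (\<Sum>i=0..k. h$i * (g^i$k)) * ?P k)"
    by (simp add: subst_bs_def N_def fps_compose_nth mult.commute)
  also have "\<dots> = (\<Sum>k\<le>N. \<Sum>i\<le>N. h$i * (g^i$k) * ?P k)"
  proof (intro sum.cong refl)
    fix k assume k: "k \<in> {..N}"
    have "(\<Sum>i=0..k. h$i * (g^i$k)) = (\<Sum>i\<le>N. h$i * (g^i$k))"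
      by (rule sum.mono_neutral_left) (use k startsby_zero_power_prefix[OF g0] in auto)
    then show "(\<Sum>i=0..k. h$i * (g^i$k)) * ?P k = (\<Sum>i\<le>N. h$i * (g^i$k) * ?P k)"
      by (simp add: sum_distrib_right)
  qed
  also have "\<dots> = (\<Sum>i\<le>N. h$i * subst_bs (g^i) S m n)"
    by (subst sum.swap) (simp add: subst_bs_def N_def sum_distrib_left mult.assoc)
  also have "\<dots> = subst_bs h (subst_bs g S) m n"
    using subst_bs_pow[of S, OF S0] by (simp add: subst_bs_def N_def)
  finally show "subst_bs (h oo g) S m n = subst_bs h (subst_bs g S) m n" .
qed

section \<open>The logarithm and the formal group law as a substitution\<close>

definition log_fps :: "nat \<Rightarrow> (nat \<Rightarrow> 'a::comm_ring_1) \<Rightarrow> 'a fps" where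
  "log_fps p l = Abs_fps (log_coeff p l)"

lemma log_fps_nth: "log_fps p l $ k = log_coeff p l k"
  by (simp add: log_fps_def)

lemma r_less_pow: "p \<ge> (2::nat) \<Longrightarrow> r < p ^ r"
  using less_exp[of r] power_mono[of 2 p r] by linarith

lemma log_coeff_pow:
  assumes "p \<ge> 2" "r \<ge> 1"
  shows "log_coeff p l (p ^ r) = l r"
proof -
  have "(THE r'. r' \<ge> 1 \<and> p ^ r = p ^ r') = r"
    by (rule the_equality) (use assms in \<open>auto simp: power_inject_exp\<close>)
  then show ?thesis using assms unfolding log_coeff_def by auto
qed

lemma log_coeff_Suc0: "log_coeff p l (Suc 0) = 1"
  by (simp add: log_coeff_def)

lemma log_coeff_0: "p \<ge> 2 \<Longrightarrow> log_coeff p l 0 = 0"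
  by (auto simp: log_coeff_def)

lemma log_coeff_other:
  "k \<noteq> 1 \<Longrightarrow> (\<And>r. r \<ge> 1 \<Longrightarrow> k \<noteq> p ^ r) \<Longrightarrow> log_coeff p l k = 0"
  by (auto simp: log_coeff_def)

lemma log_fps_0: "p \<ge> 2 \<Longrightarrow> log_fps p l $ 0 = 0"
  by (simp add: log_fps_nth log_coeff_0)

text \<open>Pairing the coefficients of log with a sequence a vanishing beyond N only picks up the
  terms k = 1 and k = p^r; this is the finite sum in the definition of log_of_bs.\<close>

lemma sum_log_coeff:
  assumes p2: "p \<ge> 2" and N: "N \<ge> 1" and a: "\<And>k. k > N \<Longrightarrow> a k = 0"
  shows "(\<Sum>k\<le>N. log_coeff p l k * a k) = a 1 + (\<Sum>r\<in>{1..N}. l r * a (p ^ r))"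
proof -
  define Pw where "Pw = (\<lambda>r. p ^ r) ` {1..N}"
  have finPw: "finite Pw" by (simp add: Pw_def)
  have "p ^ r \<noteq> 1" if "r \<ge> 1" for r
    using one_less_power[of p r] p2 that by auto
  then have one: "1 \<notin> Pw" unfolding Pw_def by (metis atLeastAtMost_iff imageE)
  let ?f = "\<lambda>k. log_coeff p l k * a k"
  have "(\<Sum>k\<le>N. ?f k) = (\<Sum>k\<in>{..N} \<union> Pw. ?f k)"
    by (rule sum.mono_neutral_left) (auto simp: finPw a)
  also have "\<dots> = (\<Sum>k\<in>insert 1 Pw. ?f k)"
  proof (rule sum.mono_neutral_right)
    show "\<forall>k\<in>{..N} \<union> Pw - insert 1 Pw. ?f k = 0"
    proof
      fix k assume k: "k \<in> {..N} \<union> Pw - insert 1 Pw"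
      have "k \<noteq> p ^ r" if "r \<ge> 1" for r
        using k that r_less_pow[OF p2, of r] by (auto simp: Pw_def)
      then show "?f k = 0" using k by (simp add: log_coeff_other)
    qed
  qed (use finPw N in auto)
  also have "\<dots> = ?f 1 + (\<Sum>k\<in>Pw. ?f k)"
    using finPw one by simp
  also have "(\<Sum>k\<in>Pw. ?f k) = (\<Sum>r\<in>{1..N}. ?f (p ^ r))"
    unfolding Pw_def
    by (rule sum.reindex[unfolded comp_def]) (use p2 in \<open>auto simp: inj_on_def power_inject_exp\<close>)
  also have "\<dots> = (\<Sum>r\<in>{1..N}. l r * a (p ^ r))"
    using p2 by (simp add: log_coeff_pow)
  finally show ?thesis by (simp add: log_coeff_Suc0)
qed

lemma subst_bs_log:
  assumes p2: "p \<ge> 2" and F0: "F 0 0 = 0"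
  shows "subst_bs (log_fps p l) F = log_of_bs p l F"
proof (intro ext)
  fix m n :: nat
  show "subst_bs (log_fps p l) F m n = log_of_bs p l F m n"
  proof (cases "m + n = 0")
    case True
    then show ?thesis using F0 p2 by (simp add: subst_bs_def log_of_bs_def log_fps_nth log_coeff_0)
  next
    case False
    then have "(\<Sum>k\<le>m+n. log_coeff p l k * bs_pow F k m n)
        = bs_pow F 1 m n + (\<Sum>r\<in>{1..m+n}. l r * bs_pow F (p ^ r) m n)"
      by (intro sum_log_coeff p2) (auto simp: bs_pow_low_degree[of F, OF F0])
    then show ?thesis by (simp add: subst_bs_def log_of_bs_def log_fps_nth bs_mult_one)
  qed
qed

lemma log_sum_0: "p \<ge> 2 \<Longrightarrow> log_sum p l 0 0 = 0"
  by (simp add: log_sum_def log_coeff_0)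

text \<open>F(x,y) = g(log x + log y) with g the compositional inverse of log.  This also shows that
  the definite description in FBP_coeff is well defined.\<close>

lemma FBP_coeff_subst:
  fixes l :: "nat \<Rightarrow> 'a::field_char_0"
  assumes p2: "p \<ge> 2"
  shows "FBP_coeff p l = subst_bs (fps_inv (log_fps p l)) (log_sum p l)"
proof -
  let ?L = "log_fps p l" and ?g = "fps_inv (log_fps p l)" and ?S = "log_sum p l"
  have L0: "?L $ 0 = 0" using p2 by (rule log_fps_0)
  have L1: "?L $ 1 \<noteq> 0" by (simp add: log_fps_nth log_coeff_Suc0)
  have S0: "?S 0 0 = 0" using p2 by (rule log_sum_0)
  have g0: "?g $ 0 = 0" by (simp add: fps_inv_def)
  show ?thesis unfolding FBP_coeff_def
  proof (rule the_equality)
    have F0: "subst_bs ?g ?S 0 0 = 0" by (simp add: subst_bs_00 g0)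
    have "log_of_bs p l (subst_bs ?g ?S) = subst_bs ?L (subst_bs ?g ?S)"
      by (rule subst_bs_log[where F="subst_bs ?g ?S", OF p2 F0, symmetric])
    also have "\<dots> = subst_bs (?L oo ?g) ?S"
      by (rule subst_bs_compose[where S="?S", OF S0 g0, symmetric])
    also have "\<dots> = ?S" by (simp add: fps_inv_right[OF L0 L1] subst_bs_X[of ?S, OF S0])
    finally show "subst_bs ?g ?S 0 0 = 0 \<and> log_of_bs p l (subst_bs ?g ?S) = ?S" using F0 by simp
  next
    fix F assume F: "F 0 0 = 0 \<and> log_of_bs p l F = ?S"
    then have F0: "F 0 0 = 0" by simp
    have "F = subst_bs fps_X F" by (rule subst_bs_X[of F, OF F0, symmetric])
    also have "\<dots> = subst_bs (?g oo ?L) F" by (simp add: fps_inv[OF L0 L1])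
    also have "\<dots> = subst_bs ?g (subst_bs ?L F)" by (rule subst_bs_compose[where S=F, OF F0 L0])
    also have "subst_bs ?L F = ?S" using F subst_bs_log[where F=F, OF p2 F0] by simp
    finally show "F = subst_bs ?g ?S" .
  qed
qed

section \<open>Lagrange inversion\<close>

text \<open>For L = x P with P(0) = 1 and g the compositional inverse of L, Lagrange inversion states
  n g_n = [x^(n-1)] P^(-n).  The proof differentiates the truncation of g(L) = x and uses that
  [x^(n-1)] P^(-n) L^(k-1) L' vanishes unless k = n.\<close>

lemma fps_deriv_inverse_power:
  fixes P :: "'a::field fps"
  assumes "P $ 0 \<noteq> 0"
  shows "fps_deriv (inverse P ^ m) = - fps_const (of_nat m) * (inverse P ^ (m+1) * fps_deriv P)"
proof (cases m)
  case (Suc k)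
  have dQ: "fps_deriv (inverse P) = - fps_deriv P * (inverse P)\<^sup>2"
    using assms by (rule fps_inverse_deriv)
  have pw: "inverse P ^ (m+1) = (inverse P)\<^sup>2 * inverse P ^ (m - 1)"
    using Suc by (simp add: power2_eq_square)
  show ?thesis
    unfolding fps_deriv_power dQ pw by algebra
qed simp

lemma lagrange_residue:
  fixes P :: "'a::field_char_0 fps"
  assumes P0: "P $ 0 = 1"
  shows "(inverse P ^ (m+1) * fps_deriv (fps_X * P)) $ m = (if m = 0 then 1 else 0)"
proof -
  define Q where "Q = inverse P"
  have QP: "Q * P = 1" unfolding Q_def using P0 by (intro inverse_mult_eq_1) simp
  have "Q ^ (m+1) * fps_deriv (fps_X * P) = Q ^ m * (Q * P) + fps_X * (Q ^ (m+1) * fps_deriv P)"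
    by (simp add: algebra_simps)
  then have eq: "Q ^ (m+1) * fps_deriv (fps_X * P) = Q ^ m + fps_X * (Q ^ (m+1) * fps_deriv P)"
    by (simp add: QP)
  show ?thesis
  proof (cases m)
    case 0 then show ?thesis using eq P0 by (simp add: Q_def)
  next
    case (Suc k)
    have "of_nat m * (Q ^ m $ m) = fps_deriv (Q ^ m) $ k"
      by (metis Suc Suc_eq_plus1 fps_deriv_nth)
    also have "\<dots> = of_nat m * (- (Q ^ (m+1) * fps_deriv P) $ k)"
      using P0 by (simp add: Q_def fps_deriv_inverse_power)
    finally have e: "of_nat m * (Q ^ m $ m) = of_nat m * (- (Q ^ (m+1) * fps_deriv P) $ k)" .
    have "(of_nat m :: 'a) \<noteq> 0" using Suc by (simp only: of_nat_eq_0_iff)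
    then have "Q ^ m $ m = - (Q ^ (m+1) * fps_deriv P) $ k"
      using e by (metis mult_cancel_left)
    then show ?thesis using eq Suc by (simp add: Q_def)
  qed
qed

lemma lagrange_term:
  fixes P :: "'a::field_char_0 fps"
  assumes P0: "P $ 0 = 1" and k: "1 \<le> k" "k \<le> n"
  defines "L \<equiv> fps_X * P"
  shows "(inverse P ^ n * (L ^ (k - 1) * fps_deriv L)) $ (n - 1) = (if k = n then 1 else 0)"
proof -
  define Q where "Q = inverse P"
  have QP: "Q * P = 1" unfolding Q_def using P0 by (intro inverse_mult_eq_1) simp
  have "(n - k + 1) + (k - 1) = n" using k by simp
  then have "Q ^ n = Q ^ (n - k + 1) * Q ^ (k - 1)" by (metis power_add)
  then have "Q ^ n * (L ^ (k - 1) * fps_deriv L)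
      = fps_X ^ (k - 1) * ((Q * P) ^ (k - 1) * (Q ^ (n - k + 1) * fps_deriv L))"
    by (simp add: L_def power_mult_distrib algebra_simps)
  also have "\<dots> = fps_X ^ (k - 1) * (Q ^ (n - k + 1) * fps_deriv L)"
    by (simp only: QP power_one mult_1_left)
  finally have eq: "Q ^ n * (L ^ (k - 1) * fps_deriv L) = fps_X ^ (k - 1) * (Q ^ (n - k + 1) * fps_deriv L)" .
  have "(Q ^ n * (L ^ (k - 1) * fps_deriv L)) $ (n - 1) = (Q ^ (n - k + 1) * fps_deriv L) $ (n - k)"
    unfolding eq fps_X_power_mult_nth using k by simp
  also have "\<dots> = (if n - k = 0 then 1 else 0)"
    using lagrange_residue[OF P0, of "n - k"] by (simp add: Q_def L_def)
  finally show ?thesis using k by (auto simp: Q_def)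
qed

text \<open>The truncation sum_(k<=n) g_k L^k of g(L) = x agrees with x up to degree n, so its
  derivative agrees with 1 below degree n.\<close>

lemma truncated_inverse_deriv:
  assumes L0: "L $ 0 = 0" and L1: "L $ 1 \<noteq> 0" and j: "j < n"
  shows "fps_deriv (\<Sum>k=0..n. fps_const (fps_inv L $ k) * L ^ k) $ j = (if j = 0 then 1 else 0)"
proof -
  have "(\<Sum>k=0..n. fps_const (fps_inv L $ k) * L ^ k) $ (j + 1)
      = (\<Sum>k=0..n. fps_inv L $ k * (L ^ k $ (j + 1)))"
    by (simp add: fps_sum_nth)
  also have "\<dots> = (\<Sum>k=0..j+1. fps_inv L $ k * (L ^ k $ (j + 1)))"
    by (rule sum.mono_neutral_right) (use j startsby_zero_power_prefix[OF L0] in auto)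
  also have "\<dots> = (fps_inv L oo L) $ (j + 1)" by (simp add: fps_compose_nth)
  finally show ?thesis by (simp add: fps_inv[OF L0 L1] fps_X_def)
qed

lemma fps_mult_const_inner_nth: "(A * (fps_const (c::'a::comm_ring_1) * B)) $ n = c * (A * B) $ n"
  by (simp only: mult.left_commute[of A] fps_mult_left_const_nth)

theorem lagrange_inversion:
  fixes P :: "'a::field_char_0 fps"
  assumes P0: "P $ 0 = 1" and n: "n \<ge> 1"
  shows "of_nat n * fps_inv (fps_X * P) $ n = (inverse P ^ n) $ (n - 1)"
proof -
  define L where "L = fps_X * P"
  define g where "g = fps_inv L"
  define A where "A = (\<Sum>k=0..n. fps_const (g $ k) * L ^ k)"
  let ?Q = "inverse P ^ n"
  have L0: "L $ 0 = 0" and L1: "L $ 1 \<noteq> 0" using P0 by (simp_all add: L_def)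
  have "(?Q * fps_deriv A) $ (n - 1) = (\<Sum>i=0..n-1. ?Q $ i * fps_deriv A $ (n - 1 - i))"
    by (simp add: fps_mult_nth)
  also have "\<dots> = (\<Sum>i=0..n-1. if i = n - 1 then ?Q $ i else 0)"
  proof (intro sum.cong refl)
    fix i assume "i \<in> {0..n-1}"
    then have "n - 1 - i < n" "n - 1 - i = 0 \<longleftrightarrow> i = n - 1" using n by auto
    then show "?Q $ i * fps_deriv A $ (n - 1 - i) = (if i = n - 1 then ?Q $ i else 0)"
      using truncated_inverse_deriv[OF L0 L1, of "n - 1 - i" n] unfolding A_def g_def
      by (auto simp del: fps_deriv_nth)
  qed
  also have "\<dots> = ?Q $ (n - 1)" by simp
  finally have lhs: "(?Q * fps_deriv A) $ (n - 1) = ?Q $ (n - 1)" .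
  have dA: "fps_deriv A = (\<Sum>k=0..n. fps_const (of_nat k * g $ k) * (L ^ (k - 1) * fps_deriv L))"
    unfolding A_def fps_deriv_sum
    by (intro sum.cong refl) (simp add: fps_deriv_power fps_const_mult mult_ac)
  have "(?Q * fps_deriv A) $ (n - 1)
      = (\<Sum>k=0..n. g $ k * of_nat k * (?Q * (L ^ (k - 1) * fps_deriv L)) $ (n - 1))"
    unfolding dA sum_distrib_left fps_sum_nth fps_mult_const_inner_nth
    by (simp add: mult_ac)
  also have "\<dots> = (\<Sum>k=0..n. if k = n then g $ k * of_nat k else 0)"
  proof (intro sum.cong refl)
    fix k assume "k \<in> {0..n}"
    then show "g $ k * of_nat k * (?Q * (L ^ (k - 1) * fps_deriv L)) $ (n - 1)
        = (if k = n then g $ k * of_nat k else 0)"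
      using lagrange_term[OF P0, of k n] n by (cases "k = 0") (auto simp: L_def)
  qed
  also have "\<dots> = g $ n * of_nat n" by simp
  finally show ?thesis using lhs by (simp add: g_def L_def mult.commute)
qed

section \<open>Negative binomial coefficients\<close>

text \<open>Coefficients of (1 + W)^(-n) via the binomial series: (1 + W)^(-n) = B_(-n)(W).\<close>

lemma inverse_power_coeff:
  fixes W :: "'a::field_char_0 fps"
  assumes W0: "W $ 0 = 0"
  shows "(inverse (1 + W) ^ n) $ q = (\<Sum>i=0..q. ((- of_nat n) gchoose i) * (W ^ i $ q))"
proof -
  have P: "(1 + W) ^ n = (1 + fps_X) ^ n oo W"
    using W0 by (simp add: fps_compose_power[symmetric] fps_compose_add_distrib)
  have "(1 + W) ^ n * (fps_binomial (- of_nat n) oo W)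
      = (fps_binomial (of_nat n) * fps_binomial (- of_nat n)) oo W"
    by (simp add: P fps_binomial_of_nat fps_compose_mult_distrib[OF W0])
  also have "\<dots> = 1" by (simp flip: fps_binomial_add_mult)
  finally have "inverse ((1 + W) ^ n) = fps_binomial (- of_nat n) oo W"
    by (rule fps_inverse_unique)
  then have "inverse (1 + W) ^ n = fps_binomial (- of_nat n) oo W"
    by (simp add: fps_inverse_power)
  then show ?thesis by (simp add: fps_compose_nth)
qed

lemma gbinomial_neg_of_nat:
  assumes n: "n \<ge> 1"
  shows "((- of_nat n) gchoose m :: 'a::field_char_0) = (-1) ^ m * (fact (n + m - 1) / (fact m * fact (n - 1)))"
proof -
  have "((- of_nat n) gchoose m :: 'a) = (-1) ^ m * ((of_nat n + of_nat m - 1) gchoose m)"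
    by (rule gbinomial_minus)
  also have "(of_nat n + of_nat m - 1 :: 'a) = of_nat (n + m - 1)" using n by (simp add: of_nat_diff)
  also have "(of_nat (n + m - 1) gchoose m :: 'a) = of_nat ((n + m - 1) choose m)"
    by (simp add: binomial_gbinomial)
  also have "\<dots> = fact (n + m - 1) / (fact m * fact (n + m - 1 - m))"
    using n by (intro binomial_fact) simp
  also have "n + m - 1 - m = n - 1" by simp
  finally show ?thesis .
qed

section \<open>Powers of log x + log y\<close>

text \<open>A univariate series viewed as a series in y alone; fps_const views it as a series in x.\<close>

definition in_y :: "'a::comm_ring_1 fps \<Rightarrow> 'a fps fps" where
  "in_y B = Abs_fps (\<lambda>n. fps_const (B $ n))"

lemma in_y_nth [simp]: "in_y B $ n = fps_const (B $ n)"
  by (simp add: in_y_def)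

lemma fps_const_sum: "fps_const (sum f A) = (\<Sum>x\<in>A. fps_const (f x))"
  by (induction A rule: infinite_finite_induct) (simp_all flip: fps_const_add)

lemma in_y_mult: "in_y (A * B) = in_y A * in_y B"
  by (rule fps_ext) (simp add: fps_mult_nth fps_const_sum[symmetric] fps_const_mult)

lemma in_y_pow: "in_y (A ^ k) = in_y A ^ k"
proof (induction k)
  case 0
  show ?case by (rule fps_ext) (simp add: fps_one_nth)
qed (simp add: in_y_mult)

lemma bs_fps_log_sum: "bs_fps (log_sum p l) = fps_const (log_fps p l) + in_y (log_fps p l)"
  by (rule fps_ext, rule fps_ext) (simp add: log_sum_def log_fps_nth)

lemma bs_pow_log_sum:
  "bs_pow (log_sum p l) n i j
     = (\<Sum>a\<le>n. of_nat (n choose a) * (log_fps p l ^ a $ i) * (log_fps p l ^ (n - a) $ j))"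
proof -
  let ?L = "log_fps p l"
  have "bs_pow (log_sum p l) n i j = bs_fps (bs_pow (log_sum p l) n) $ j $ i" by simp
  also have "bs_fps (bs_pow (log_sum p l) n) = (fps_const ?L + in_y ?L) ^ n"
    by (simp add: bs_fps_pow bs_fps_log_sum)
  also have "\<dots> = (\<Sum>a\<le>n. of_nat (n choose a) * fps_const ?L ^ a * in_y ?L ^ (n - a))"
    by (rule binomial_ring)
  also have "\<dots> = (\<Sum>a\<le>n. fps_const (fps_const (of_nat (n choose a)) * ?L ^ a) * in_y (?L ^ (n - a)))"
    by (simp add: in_y_pow fps_const_power flip: fps_of_nat)
  also have "\<dots> $ j $ i = (\<Sum>a\<le>n. of_nat (n choose a) * (?L ^ a $ i) * (?L ^ (n - a) $ j))"
    by (simp add: fps_sum_nth)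
  finally show ?thesis .
qed

section \<open>The multinomial theorem\<close>

definition comps :: "'b set \<Rightarrow> nat \<Rightarrow> ('b \<Rightarrow> nat) set" where
  "comps A m = {k. (\<forall>r. r \<notin> A \<longrightarrow> k r = 0) \<and> (\<Sum>r\<in>A. k r) = m}"

definition multinom :: "'b set \<Rightarrow> ('b \<Rightarrow> nat) \<Rightarrow> nat" where
  "multinom A k = fact (\<Sum>r\<in>A. k r) div (\<Prod>r\<in>A. fact (k r))"

lemma prod_fact_dvd: "finite A \<Longrightarrow> (\<Prod>r\<in>A. fact (k r)) dvd (fact (\<Sum>r\<in>A. k r) :: nat)"
proof (induction A rule: finite_induct)
  case (insert a A)
  have "(\<Prod>r\<in>insert a A. fact (k r)) = fact (k a) * (\<Prod>r\<in>A. fact (k r))"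
    using insert by simp
  also have "\<dots> dvd fact (k a) * (fact (\<Sum>r\<in>A. k r) :: nat)"
    by (intro mult_dvd_mono dvd_refl insert.IH)
  also have "\<dots> dvd (fact (k a + (\<Sum>r\<in>A. k r)) :: nat)" by (rule fact_fact_dvd_fact)
  finally show ?case using insert by simp
qed simp

lemma multinom_mult: "finite A \<Longrightarrow> (\<Prod>r\<in>A. fact (k r)) * multinom A k = fact (\<Sum>r\<in>A. k r)"
  unfolding multinom_def by (rule dvd_mult_div_cancel[OF prod_fact_dvd])

lemma of_nat_multinom:
  assumes "finite A"
  shows "(of_nat (multinom A k) :: 'a::field_char_0) = fact (\<Sum>r\<in>A. k r) / (\<Prod>r\<in>A. fact (k r))"
proof -
  have "(\<Prod>r\<in>A. fact (k r)) * (of_nat (multinom A k) :: 'a) = fact (\<Sum>r\<in>A. k r)"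
    using arg_cong[OF multinom_mult[OF assms, of k], of "of_nat :: nat \<Rightarrow> 'a"]
    by (simp add: of_nat_prod)
  moreover have "(\<Prod>r\<in>A. fact (k r) :: 'a) \<noteq> 0" by (simp add: assms)
  ultimately show ?thesis by (simp add: field_simps)
qed

lemma finite_comps: "finite A \<Longrightarrow> finite (comps A m)"
proof -
  assume fA: "finite A"
  have "comps A m \<subseteq> {f. \<forall>x. (x \<in> A \<longrightarrow> f x \<in> {..m}) \<and> (x \<notin> A \<longrightarrow> f x = 0)}"
  proof
    fix k assume k: "k \<in> comps A m"
    have "k x \<le> (\<Sum>r\<in>A. k r)" if "x \<in> A" for x
      using fA that by (intro member_le_sum) auto
    then have "k x \<le> m" if "x \<in> A" for x
      using k that by (auto simp: comps_def)
    then show "k \<in> {f. \<forall>x. (x \<in> A \<longrightarrow> f x \<in> {..m}) \<and> (x \<notin> A \<longrightarrow> f x = 0)}"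
      using k by (auto simp: comps_def)
  qed
  then show ?thesis by (rule finite_subset) (intro finite_set_of_finite_funs fA finite_atMost)
qed

lemma comps_insert_bij:
  assumes fA: "finite A" and a: "a \<notin> A"
  shows "bij_betw (\<lambda>(j, k). k(a := j)) (SIGMA j:{..m}. comps A (m - j)) (comps (insert a A) m)"
proof (rule bij_betw_byWitness[where f' = "\<lambda>k. (k a, k(a := 0))"])
  have upd: "(\<Sum>r\<in>A. if r = a then j else k r) = (\<Sum>r\<in>A. k r)" for k :: "'a \<Rightarrow> nat" and j
    by (rule sum.cong) (use a in auto)
  show "\<forall>x\<in>SIGMA j:{..m}. comps A (m - j). (\<lambda>k. (k a, k(a := 0))) ((\<lambda>(j, k). k(a := j)) x) = x"
    using a by (auto simp: comps_def fun_eq_iff)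
  show "\<forall>k\<in>comps (insert a A) m. (\<lambda>(j, k). k(a := j)) (k a, k(a := 0)) = k"
    by auto
  show "(\<lambda>(j, k). k(a := j)) ` (SIGMA j:{..m}. comps A (m - j)) \<subseteq> comps (insert a A) m"
    using fA a by (auto simp: comps_def upd)
  show "(\<lambda>k. (k a, k(a := 0))) ` comps (insert a A) m \<subseteq> (SIGMA j:{..m}. comps A (m - j))"
    using fA a by (auto simp: comps_def upd)
qed

lemma multinom_insert:
  assumes fA: "finite A" and a: "a \<notin> A" and k: "k \<in> comps A (m - j)" and j: "j \<le> m"
  shows "multinom (insert a A) (k(a := j)) = (m choose j) * multinom A k"
proof -
  have sA: "(\<Sum>r\<in>A. k r) = m - j" using k by (simp add: comps_def)
  have s: "(\<Sum>r\<in>insert a A. (k(a := j)) r) = m"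
  proof -
    have "(\<Sum>r\<in>A. if r = a then j else k r) = (\<Sum>r\<in>A. k r)" by (rule sum.cong) (use a in auto)
    then show ?thesis using fA a j sA by simp
  qed
  have pr: "(\<Prod>r\<in>insert a A. fact ((k(a := j)) r)) = fact j * (\<Prod>r\<in>A. fact (k r) :: nat)"
  proof -
    have "(\<Prod>r\<in>A. fact (if r = a then j else k r)) = (\<Prod>r\<in>A. fact (k r) :: nat)"
      by (rule prod.cong) (use a in auto)
    then show ?thesis using fA a by simp
  qed
  have "fact j * (\<Prod>r\<in>A. fact (k r)) * multinom (insert a A) (k(a := j)) = (fact m :: nat)"
    using multinom_mult[of "insert a A" "k(a := j)"] fA s pr by simp
  also have "\<dots> = fact j * fact (m - j) * (m choose j)" using binomial_fact_lemma[OF j] by simp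
  also have "\<dots> = fact j * ((\<Prod>r\<in>A. fact (k r)) * multinom A k) * (m choose j)"
    using multinom_mult[OF fA, of k] sA by simp
  finally show ?thesis using fA by (simp add: ac_simps)
qed

theorem multinomial_theorem:
  fixes z :: "'b \<Rightarrow> 'c::comm_semiring_1"
  assumes "finite A"
  shows "(\<Sum>r\<in>A. z r) ^ m = (\<Sum>k\<in>comps A m. of_nat (multinom A k) * (\<Prod>r\<in>A. z r ^ k r))"
  using assms
proof (induction A arbitrary: m rule: finite_induct)
  case empty
  have c0: "comps {} 0 = {\<lambda>_. 0}" and cS: "comps {} (Suc n) = {}" for n
    by (auto simp: comps_def)
  show ?case by (cases m) (simp_all add: multinom_def c0 cS)
next
  case (insert a A)
  note fA = insert.hyps(1) and a = insert.hyps(2)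
  let ?t = "\<lambda>A k. of_nat (multinom A k) * (\<Prod>r\<in>A. z r ^ k r)"
  have "(\<Sum>r\<in>insert a A. z r) ^ m = (z a + (\<Sum>r\<in>A. z r)) ^ m" using fA a by simp
  also have "\<dots> = (\<Sum>j\<le>m. of_nat (m choose j) * z a ^ j * (\<Sum>r\<in>A. z r) ^ (m - j))"
    by (rule binomial_ring)
  also have "\<dots> = (\<Sum>(j,k)\<in>(SIGMA j:{..m}. comps A (m - j)). of_nat (m choose j) * z a ^ j * ?t A k)"
    by (simp add: insert.IH sum_distrib_left sum.Sigma finite_comps fA)
  also have "\<dots> = (\<Sum>(j,k)\<in>(SIGMA j:{..m}. comps A (m - j)). ?t (insert a A) (k(a := j)))"
  proof (intro sum.cong refl, clarify)
    fix j k assume "j \<le> m" "k \<in> comps A (m - j)"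
    moreover have "(\<Prod>r\<in>A. z r ^ (if r = a then j else k r)) = (\<Prod>r\<in>A. z r ^ k r)"
      by (rule prod.cong) (use a in auto)
    ultimately show "of_nat (m choose j) * z a ^ j * ?t A k = ?t (insert a A) (k(a := j))"
      using fA a by (simp add: multinom_insert ac_simps)
  qed
  also have "\<dots> = (\<Sum>k\<in>comps (insert a A) m. ?t (insert a A) k)"
    using sum.reindex_bij_betw[OF comps_insert_bij[OF fA a, of m], of "?t (insert a A)"]
    by (simp add: case_prod_unfold)
  finally show ?case .
qed

lemma fps_const_prod: "fps_const (prod f A) = (\<Prod>x\<in>A. fps_const (f x))"
  by (induction A rule: infinite_finite_induct) (simp_all flip: fps_const_mult)

lemma monomial_sum_power_nth:
  fixes c :: "'b \<Rightarrow> 'a::comm_ring_1"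
  assumes fA: "finite A"
  shows "(\<Sum>r\<in>A. fps_const (c r) * fps_X ^ e r) ^ m $ q =
    (\<Sum>k\<in>{k\<in>comps A m. (\<Sum>r\<in>A. e r * k r) = q}. of_nat (multinom A k) * (\<Prod>r\<in>A. c r ^ k r))"
proof -
  have pr: "(\<Prod>r\<in>A. (fps_const (c r) * fps_X ^ e r) ^ k r)
      = fps_const (\<Prod>r\<in>A. c r ^ k r) * fps_X ^ (\<Sum>r\<in>A. e r * k r)" for k
    by (simp add: power_mult_distrib prod.distrib fps_const_prod power_sum power_mult)
  have "(\<Sum>r\<in>A. fps_const (c r) * fps_X ^ e r) ^ m $ q = (\<Sum>k\<in>comps A m.
      of_nat (multinom A k) * ((\<Prod>r\<in>A. c r ^ k r) * (if (\<Sum>r\<in>A. e r * k r) = q then 1 else 0)))"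
    by (simp add: multinomial_theorem[OF fA] pr fps_sum_nth fps_of_nat[symmetric] eq_commute[of q]
        del: fps_const_power)
  also have "\<dots> = (\<Sum>k\<in>comps A m.
      if (\<Sum>r\<in>A. e r * k r) = q then of_nat (multinom A k) * (\<Prod>r\<in>A. c r ^ k r) else 0)"
    by (intro sum.cong refl) auto
  also have "\<dots> = (\<Sum>k\<in>{k\<in>comps A m. (\<Sum>r\<in>A. e r * k r) = q}. of_nat (multinom A k) * (\<Prod>r\<in>A. c r ^ k r))"
    by (rule sum.inter_filter[symmetric]) (rule finite_comps[OF fA])
  finally show ?thesis .
qed

lemma power_nth_agree:
  assumes "\<And>k. k \<le> N \<Longrightarrow> A $ k = B $ k" "q \<le> N"
  shows "(A ^ m) $ q = (B ^ m) $ q"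
  using assms(2)
proof (induction m arbitrary: q)
  case (Suc m)
  then show ?case using assms(1) by (simp add: fps_mult_nth)
qed simp

section \<open>Polynomial truncations of the logarithm\<close>

text \<open>Up to degree R, log x agrees with the polynomial sum_(r<=R) lcoeff l r x^(p^r), and
  log x / x - 1 with the polynomial sum_(1<=r<=R) l_r x^(p^r - 1); these make the multinomial
  theorem applicable.\<close>

definition lcoeff :: "(nat \<Rightarrow> 'a::comm_ring_1) \<Rightarrow> nat \<Rightarrow> 'a" where
  "lcoeff l r = (if r = 0 then 1 else l r)"

definition log_trunc :: "nat \<Rightarrow> (nat \<Rightarrow> 'a::comm_ring_1) \<Rightarrow> nat \<Rightarrow> 'a fps" where
  "log_trunc p l R = (\<Sum>r\<in>{0..R}. fps_const (lcoeff l r) * fps_X ^ (p ^ r))"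

definition log_tail :: "nat \<Rightarrow> (nat \<Rightarrow> 'a::comm_ring_1) \<Rightarrow> 'a fps" where
  "log_tail p l = Abs_fps (\<lambda>k. if k = 0 then 0 else log_coeff p l (Suc k))"

definition log_tail_trunc :: "nat \<Rightarrow> (nat \<Rightarrow> 'a::comm_ring_1) \<Rightarrow> nat \<Rightarrow> 'a fps" where
  "log_tail_trunc p l R = (\<Sum>r\<in>{1..R}. fps_const (l r) * fps_X ^ (p ^ r - 1))"

lemma log_tail_0: "log_tail p l $ 0 = 0"
  by (simp add: log_tail_def)

lemma log_fps_eq:
  assumes "p \<ge> 2" shows "log_fps p l = fps_X * (1 + log_tail p l)"
proof (rule fps_ext)
  fix n
  show "log_fps p l $ n = (fps_X * (1 + log_tail p l)) $ n"
  proof (cases n)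
    case 0 then show ?thesis using assms by (simp add: log_fps_nth log_coeff_0)
  next
    case (Suc k)
    then show ?thesis by (cases k) (simp_all add: log_fps_nth log_tail_def log_coeff_Suc0)
  qed
qed

lemma log_trunc_eq:
  assumes "p \<ge> 1" shows "log_trunc p l R = fps_X * (1 + log_tail_trunc p l R)"
proof -
  have X: "fps_X ^ (p ^ r) = fps_X * fps_X ^ (p ^ r - 1)" for r
    using assms by (simp flip: power_Suc)
  have "(\<Sum>r\<in>{1..R}. fps_const (l r) * fps_X ^ (p ^ r))
      = fps_X * (\<Sum>r\<in>{1..R}. fps_const (l r) * fps_X ^ (p ^ r - 1))"
    unfolding sum_distrib_left by (intro sum.cong refl) (simp only: X mult.left_commute)
  then show ?thesis
    unfolding log_trunc_def log_tail_trunc_def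
    by (simp add: sum.atLeast_Suc_atMost lcoeff_def distrib_left)
qed

lemma log_trunc_agree:
  assumes p2: "p \<ge> 2" and q: "q \<le> R"
  shows "log_trunc p l R $ q = log_fps p l $ q"
proof -
  have s: "log_trunc p l R $ q = (\<Sum>r\<in>{0..R}. if q = p ^ r then lcoeff l r else 0)"
    by (simp add: log_trunc_def fps_sum_nth mult_delta_right cong: if_cong)
  show ?thesis
  proof (cases "\<exists>r0\<in>{0..R}. q = p ^ r0")
    case True
    then obtain r0 where r0: "r0 \<in> {0..R}" "q = p ^ r0" by blast
    have "log_trunc p l R $ q = (\<Sum>r\<in>{0..R}. if r = r0 then lcoeff l r else 0)"
      unfolding s using r0 p2 by (intro sum.cong refl) (auto simp: power_inject_exp)
    also have "\<dots> = log_coeff p l q"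
      using r0 p2 by (cases "r0 = 0") (simp_all add: lcoeff_def log_coeff_Suc0 log_coeff_pow)
    finally show ?thesis by (simp add: log_fps_nth)
  next
    case False
    have "q \<noteq> p ^ r" if "r \<ge> 1" for r
      using False q r_less_pow[OF p2, of r] by (cases "r \<le> R") auto
    then have "log_coeff p l q = 0"
      using False by (intro log_coeff_other) force+
    moreover have "log_trunc p l R $ q = 0" unfolding s using False by (intro sum.neutral) auto
    ultimately show ?thesis by (simp add: log_fps_nth)
  qed
qed

lemma log_tail_trunc_agree:
  assumes p2: "p \<ge> 2" and q: "q < R"
  shows "log_tail_trunc p l R $ q = log_tail p l $ q"
proof -
  have "log_tail_trunc p l R $ q = log_trunc p l R $ Suc q - (if q = 0 then 1 else 0)"
    using p2 by (simp add: log_trunc_eq)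
  also have "\<dots> = log_fps p l $ Suc q - (if q = 0 then 1 else 0)"
    using q by (simp add: log_trunc_agree[OF p2])
  also have "\<dots> = log_tail p l $ q"
    using p2 by (simp add: log_fps_eq)
  finally show ?thesis .
qed

section \<open>Multi-indices\<close>

text \<open>Multi-indices are functions nat \<Rightarrow> nat supported on a finite set of positions r, the
  position r standing for the monomial l_r x^(p^r) of the logarithm.\<close>

definition supp_in :: "nat set \<Rightarrow> (nat \<Rightarrow> nat) set" where
  "supp_in A = {k. \<forall>r. r \<notin> A \<longrightarrow> k r = 0}"

text \<open>The mass of a multi-index is the number of monomials it selects.\<close>

definition mass :: "nat \<Rightarrow> (nat \<Rightarrow> nat) \<Rightarrow> nat" where
  "mass R k = (\<Sum>r\<in>{0..R}. k r)"

definition mass1 :: "nat \<Rightarrow> (nat \<Rightarrow> nat) \<Rightarrow> nat" where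
  "mass1 R K = (\<Sum>r\<in>{1..R}. K r)"

text \<open>The excess of K is the degree of prod_r (x^(p^r - 1))^(K r), i.e. the degree in
  (log x / x)^m of the corresponding monomial.\<close>

definition excess :: "nat \<Rightarrow> nat \<Rightarrow> (nat \<Rightarrow> nat) \<Rightarrow> nat" where
  "excess p R K = (\<Sum>r\<in>{1..R}. (p ^ r - 1) * K r)"

text \<open>Ways to reach degree q with the monomials x^(p^r) of log, and multi-indices K of
  excess n - 1 (they index the Lagrange inversion formula for g_n).\<close>

definition digit_reps :: "nat \<Rightarrow> nat \<Rightarrow> nat \<Rightarrow> (nat \<Rightarrow> nat) set" where
  "digit_reps p R q = {k \<in> supp_in {0..R}. (\<Sum>r\<in>{0..R}. p ^ r * k r) = q}"

definition weight_reps :: "nat \<Rightarrow> nat \<Rightarrow> nat \<Rightarrow> (nat \<Rightarrow> nat) set" where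
  "weight_reps p R n = {K \<in> supp_in {1..R}. excess p R K = n - 1}"

lemma pow_minus_one_ge1: "p \<ge> 2 \<Longrightarrow> r \<ge> 1 \<Longrightarrow> p ^ r - 1 \<ge> (1::nat)"
  using one_less_power[of p r] by simp

lemma mass1_le_excess:
  assumes "p \<ge> 2" shows "mass1 R K \<le> excess p R K"
  unfolding mass1_def excess_def
proof (rule sum_mono)
  fix r assume "r \<in> {1..R}"
  then have "1 \<le> p ^ r - 1" using assms by (intro pow_minus_one_ge1) auto
  then show "K r \<le> (p ^ r - 1) * K r" by simp
qed

lemma finite_weighted_bounded:
  assumes fA: "finite A" and w: "\<And>r. r \<in> A \<Longrightarrow> w r \<ge> (1::nat)"
  shows "finite {k \<in> supp_in A. (\<Sum>r\<in>A. w r * k r) \<le> b}"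
proof -
  have "{k \<in> supp_in A. (\<Sum>r\<in>A. w r * k r) \<le> b}
      \<subseteq> {k. \<forall>x. (x \<in> A \<longrightarrow> k x \<in> {..b}) \<and> (x \<notin> A \<longrightarrow> k x = 0)}"
  proof (intro subsetI CollectI allI conjI impI)
    fix k x assume k: "k \<in> {k \<in> supp_in A. (\<Sum>r\<in>A. w r * k r) \<le> b}"
    show "x \<notin> A \<Longrightarrow> k x = 0" using k by (simp add: supp_in_def)
    assume x: "x \<in> A"
    have "k x \<le> w x * k x" using w[OF x] by simp
    also have "\<dots> \<le> (\<Sum>r\<in>A. w r * k r)" using fA x by (intro member_le_sum) auto
    finally show "k x \<in> {..b}" using k by simp
  qed
  then show ?thesis by (rule finite_subset) (intro finite_set_of_finite_funs fA finite_atMost)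
qed

lemma finite_digit_reps: "p \<ge> 2 \<Longrightarrow> finite (digit_reps p R q)"
  by (rule finite_subset[OF _ finite_weighted_bounded[of "{0..R}" "\<lambda>r. p ^ r" q]])
     (auto simp: digit_reps_def)

lemma finite_weight_reps:
  assumes "p \<ge> 2" shows "finite (weight_reps p R n)"
proof (rule finite_subset)
  show "finite {K \<in> supp_in {1..R}. (\<Sum>r\<in>{1..R}. (p ^ r - 1) * K r) \<le> n}"
    by (rule finite_weighted_bounded) (use pow_minus_one_ge1[OF assms] in auto)
qed (auto simp: weight_reps_def excess_def)

lemma mass_le_digit_sum:
  assumes "p \<ge> 2" "k \<in> digit_reps p R q" shows "mass R k \<le> q"
proof -
  have "mass R k \<le> (\<Sum>r\<in>{0..R}. p ^ r * k r)"
    unfolding mass_def using assms(1) by (intro sum_mono) simp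
  then show ?thesis using assms(2) by (simp add: digit_reps_def)
qed

lemma sum_group_eq:
  assumes "finite S" "finite T" "g ` S \<subseteq> T" "\<And>y. y \<in> T \<Longrightarrow> B y = {x\<in>S. g x = y}"
  shows "(\<Sum>y\<in>T. \<Sum>x\<in>B y. f y x) = (\<Sum>x\<in>S. f (g x) x)"
proof -
  have "(\<Sum>y\<in>T. \<Sum>x\<in>B y. f y x) = (\<Sum>y\<in>T. \<Sum>x\<in>{x\<in>S. g x = y}. f (g x) x)"
    by (intro sum.cong refl) (auto simp: assms(4))
  also have "\<dots> = (\<Sum>x\<in>S. f (g x) x)" by (rule sum.group[OF assms(1,2,3)])
  finally show ?thesis .
qed

lemma sum_product_pairs:
  "(c::'a::comm_semiring_1) * sum f A * sum g B = (\<Sum>(x, y)\<in>A \<times> B. c * f x * g y)"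
proof -
  have "c * sum f A * sum g B = (\<Sum>x\<in>A. \<Sum>y\<in>B. c * f x * g y)"
    by (simp add: sum_product sum_distrib_left mult_ac)
  then show ?thesis by (simp add: sum.cartesian_product)
qed

section \<open>Coefficient formulas for g and for (log x + log y)^n\<close>

text \<open>The contribution of a multi-index (multinomial coefficient times coefficient product) to
  a power of log x / x - 1 and of log x, respectively.\<close>

definition mono_coeff1 :: "(nat \<Rightarrow> 'a::comm_ring_1) \<Rightarrow> nat \<Rightarrow> (nat \<Rightarrow> nat) \<Rightarrow> 'a" where
  "mono_coeff1 l R K = of_nat (multinom {1..R} K) * (\<Prod>r\<in>{1..R}. l r ^ K r)"

definition mono_coeff :: "(nat \<Rightarrow> 'a::comm_ring_1) \<Rightarrow> nat \<Rightarrow> (nat \<Rightarrow> nat) \<Rightarrow> 'a" where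
  "mono_coeff l R k = of_nat (multinom {0..R} k) * (\<Prod>r\<in>{0..R}. lcoeff l r ^ k r)"

lemma log_tail_power_coeff:
  assumes p2: "p \<ge> 2" and n: "1 \<le> n" "n \<le> R"
  shows "log_tail p l ^ m $ (n - 1) = (\<Sum>K\<in>{K\<in>weight_reps p R n. mass1 R K = m}. mono_coeff1 l R K)"
proof -
  have "log_tail p l ^ m $ (n - 1) = log_tail_trunc p l R ^ m $ (n - 1)"
    using n by (intro power_nth_agree[where N="R - 1"]) (simp_all add: log_tail_trunc_agree[OF p2])
  also have "\<dots> = (\<Sum>K\<in>{K\<in>comps {1..R} m. excess p R K = n - 1}. mono_coeff1 l R K)"
    unfolding log_tail_trunc_def mono_coeff1_def excess_def by (rule monomial_sum_power_nth) simp
  also have "{K\<in>comps {1..R} m. excess p R K = n - 1} = {K\<in>weight_reps p R n. mass1 R K = m}"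
    by (auto simp: comps_def weight_reps_def supp_in_def mass1_def)
  finally show ?thesis .
qed

lemma inv_log_coeff:
  fixes l :: "nat \<Rightarrow> 'a::field_char_0"
  assumes p2: "p \<ge> 2" and n: "1 \<le> n" "n \<le> R"
  shows "fps_inv (log_fps p l) $ n = (1 / of_nat n) *
    (\<Sum>K\<in>weight_reps p R n. ((- of_nat n) gchoose mass1 R K) * mono_coeff1 l R K)"
proof -
  let ?W = "log_tail p l"
  have "of_nat n * fps_inv (log_fps p l) $ n = (inverse (1 + ?W) ^ n) $ (n - 1)"
    using lagrange_inversion[of "1 + ?W" n] n by (simp add: log_fps_eq[OF p2] log_tail_0)
  also have "\<dots> = (\<Sum>m=0..n-1. ((- of_nat n) gchoose m) * (?W ^ m $ (n - 1)))"
    by (rule inverse_power_coeff) (simp add: log_tail_0)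
  also have "\<dots> = (\<Sum>m=0..n-1. \<Sum>K\<in>{K\<in>weight_reps p R n. mass1 R K = m}.
      ((- of_nat n) gchoose m) * mono_coeff1 l R K)"
    unfolding log_tail_power_coeff[OF p2 n] by (simp add: sum_distrib_left)
  also have "\<dots> = (\<Sum>K\<in>weight_reps p R n. ((- of_nat n) gchoose mass1 R K) * mono_coeff1 l R K)"
  proof (rule sum_group_eq)
    show "mass1 R ` weight_reps p R n \<subseteq> {0..n - 1}"
    proof (rule image_subsetI)
      fix K assume "K \<in> weight_reps p R n"
      then show "mass1 R K \<in> {0..n - 1}"
        using mass1_le_excess[OF p2, of R K] by (simp add: weight_reps_def)
    qed
  qed (auto simp: finite_weight_reps[OF p2])
  finally show ?thesis using n by (simp add: field_simps)
qed

lemma log_power_coeff: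
  assumes p2: "p \<ge> 2" and q: "q \<le> R"
  shows "log_fps p l ^ a $ q = (\<Sum>k\<in>{k\<in>digit_reps p R q. mass R k = a}. mono_coeff l R k)"
proof -
  have "log_fps p l ^ a $ q = log_trunc p l R ^ a $ q"
    using q by (intro power_nth_agree[where N=R]) (simp_all add: log_trunc_agree[OF p2])
  also have "\<dots> = (\<Sum>k\<in>{k\<in>comps {0..R} a. (\<Sum>r\<in>{0..R}. p ^ r * k r) = q}. mono_coeff l R k)"
    unfolding log_trunc_def mono_coeff_def by (rule monomial_sum_power_nth) simp
  also have "{k\<in>comps {0..R} a. (\<Sum>r\<in>{0..R}. p ^ r * k r) = q} = {k\<in>digit_reps p R q. mass R k = a}"
    by (auto simp: comps_def digit_reps_def supp_in_def mass_def)
  finally show ?thesis .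
qed

text \<open>Pairs of multi-indices describing a monomial x^i y^j of (log x + log y)^n.\<close>

definition digit_rep_pairs :: "nat \<Rightarrow> nat \<Rightarrow> nat \<Rightarrow> nat \<Rightarrow> nat \<Rightarrow> ((nat \<Rightarrow> nat) \<times> (nat \<Rightarrow> nat)) set" where
  "digit_rep_pairs p R i j n =
     {(k1, k2). k1 \<in> digit_reps p R i \<and> k2 \<in> digit_reps p R j \<and> mass R k1 + mass R k2 = n}"

lemma log_sum_power_coeff:
  fixes l :: "nat \<Rightarrow> 'a::field_char_0"
  assumes p2: "p \<ge> 2" and iR: "i \<le> R" and jR: "j \<le> R"
  shows "bs_pow (log_sum p l) n i j = (\<Sum>(k1, k2)\<in>digit_rep_pairs p R i j n.
      of_nat (n choose mass R k1) * mono_coeff l R k1 * mono_coeff l R k2)"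
proof -
  let ?S = "\<lambda>q a. {k\<in>digit_reps p R q. mass R k = a}"
  have "bs_pow (log_sum p l) n i j
      = (\<Sum>a\<le>n. of_nat (n choose a) * (log_fps p l ^ a $ i) * (log_fps p l ^ (n - a) $ j))"
    by (rule bs_pow_log_sum)
  also have "\<dots> = (\<Sum>a\<le>n. \<Sum>(k1, k2)\<in>?S i a \<times> ?S j (n - a).
      of_nat (n choose a) * mono_coeff l R k1 * mono_coeff l R k2)"
    by (simp only: log_power_coeff[OF p2 iR] log_power_coeff[OF p2 jR] sum_product_pairs)
  also have "\<dots> = (\<Sum>x\<in>digit_rep_pairs p R i j n. (\<lambda>a (k1, k2).
      of_nat (n choose a) * mono_coeff l R k1 * mono_coeff l R k2) (mass R (fst x)) x)"
  proof (rule sum_group_eq)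
    have "digit_rep_pairs p R i j n \<subseteq> digit_reps p R i \<times> digit_reps p R j"
      by (auto simp: digit_rep_pairs_def)
    then show "finite (digit_rep_pairs p R i j n)"
      by (rule finite_subset) (simp add: finite_digit_reps[OF p2])
  qed (auto simp: digit_rep_pairs_def)
  also have "\<dots> = (\<Sum>(k1, k2)\<in>digit_rep_pairs p R i j n.
      of_nat (n choose mass R k1) * mono_coeff l R k1 * mono_coeff l R k2)"
    by (intro sum.cong refl) auto
  finally show ?thesis .
qed

section \<open>The coefficients of F as one finite sum\<close>

text \<open>Multiplying the expansions of g_n and of the coefficient of x^i y^j in (log x + log y)^n
  and summing over n expresses alpha_ij as a sum over triples (K, k1, k2).\<close>

type_synonym index3 = "(nat \<Rightarrow> nat) \<times> (nat \<Rightarrow> nat) \<times> (nat \<Rightarrow> nat)"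

definition raw_order :: "nat \<Rightarrow> index3 \<Rightarrow> nat" where
  "raw_order R = (\<lambda>(K, k1, k2). mass R k1 + mass R k2)"

definition raw_index :: "nat \<Rightarrow> nat \<Rightarrow> nat \<Rightarrow> nat \<Rightarrow> index3 set" where
  "raw_index p R i j = {x. 1 \<le> raw_order R x \<and> (case x of (K, k1, k2) \<Rightarrow>
     K \<in> weight_reps p R (raw_order R x) \<and> k1 \<in> digit_reps p R i \<and> k2 \<in> digit_reps p R j)}"

definition raw_term :: "(nat \<Rightarrow> 'a::field_char_0) \<Rightarrow> nat \<Rightarrow> nat \<Rightarrow> index3 \<Rightarrow> 'a" where
  "raw_term l R n = (\<lambda>(K, k1, k2).
     (1 / of_nat n) * (((- of_nat n) gchoose mass1 R K) * mono_coeff1 l R K) *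
     (of_nat (n choose mass R k1) * mono_coeff l R k1 * mono_coeff l R k2))"

lemma raw_order_le: "p \<ge> 2 \<Longrightarrow> x \<in> raw_index p R i j \<Longrightarrow> raw_order R x \<le> i + j"
  using mass_le_digit_sum by (force simp: raw_order_def raw_index_def intro: add_mono)

lemma finite_raw_index:
  assumes p2: "p \<ge> 2" shows "finite (raw_index p R i j)"
proof -
  have "raw_index p R i j \<subseteq> (\<Union>n\<in>{..i+j}. weight_reps p R n) \<times> digit_reps p R i \<times> digit_reps p R j"
    using raw_order_le[OF p2] by (force simp: raw_index_def)
  then show ?thesis
    by (rule finite_subset) (auto intro: finite_weight_reps[OF p2] finite_digit_reps[OF p2])
qed

lemma FBP_coeff_raw_sum:
  fixes l :: "nat \<Rightarrow> 'a::field_char_0"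
  assumes p2: "p \<ge> 2" and R: "R = i + j"
  shows "FBP_coeff p l i j = (\<Sum>x\<in>raw_index p R i j. raw_term l R (raw_order R x) x)"
proof -
  let ?g = "fps_inv (log_fps p l)" and ?S = "log_sum p l"
  have "FBP_coeff p l i j = (\<Sum>n\<le>i+j. ?g $ n * bs_pow ?S n i j)"
    by (simp add: FBP_coeff_subst[OF p2] subst_bs_def)
  also have "\<dots> = (\<Sum>n\<in>{1..i+j}. ?g $ n * bs_pow ?S n i j)"
    by (rule sum.mono_neutral_right) (auto simp: fps_inv_def Suc_le_eq)
  also have "\<dots> = (\<Sum>n\<in>{1..i+j}. \<Sum>x\<in>weight_reps p R n \<times> digit_rep_pairs p R i j n. raw_term l R n x)"
  proof (intro sum.cong refl)
    fix n assume n: "n \<in> {1..i+j}"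
    have "?g $ n * bs_pow ?S n i j = (1 / of_nat n) *
      (\<Sum>K\<in>weight_reps p R n. ((- of_nat n) gchoose mass1 R K) * mono_coeff1 l R K) *
      (\<Sum>(k1, k2)\<in>digit_rep_pairs p R i j n. of_nat (n choose mass R k1) * mono_coeff l R k1 * mono_coeff l R k2)"
      using n R by (simp add: inv_log_coeff[OF p2, of n R] log_sum_power_coeff[OF p2, of i R j])
    also have "\<dots> = (\<Sum>x\<in>weight_reps p R n \<times> digit_rep_pairs p R i j n. raw_term l R n x)"
      unfolding sum_product_pairs by (intro sum.cong refl) (auto simp: raw_term_def)
    finally show "?g $ n * bs_pow ?S n i j = (\<Sum>x\<in>weight_reps p R n \<times> digit_rep_pairs p R i j n. raw_term l R n x)" .
  qed
  also have "\<dots> = (\<Sum>x\<in>raw_index p R i j. raw_term l R (raw_order R x) x)"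
  proof (rule sum_group_eq)
    show "raw_order R ` raw_index p R i j \<subseteq> {1..i+j}"
      using raw_order_le[OF p2] by (force simp: raw_index_def)
    show "finite (raw_index p R i j)" by (rule finite_raw_index[OF p2])
  qed (auto simp: raw_index_def raw_order_def digit_rep_pairs_def)
  finally show ?thesis .
qed

text \<open>Each term simplifies: the factorials coming from the negative binomial coefficient, the
  binomial coefficient and the multinomial coefficients telescope.\<close>

definition clean_term :: "(nat \<Rightarrow> 'a::field_char_0) \<Rightarrow> nat \<Rightarrow> index3 \<Rightarrow> 'a" where
  "clean_term l R = (\<lambda>(K, k1, k2). (-1) ^ mass1 R K *
     (fact (mass R k1 + mass R k2 + mass1 R K - 1) /
       ((\<Prod>r\<in>{1..R}. fact (K r)) * (\<Prod>r\<in>{0..R}. fact (k1 r)) * (\<Prod>r\<in>{0..R}. fact (k2 r)))) *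
     ((\<Prod>r\<in>{1..R}. l r ^ K r) * (\<Prod>r\<in>{0..R}. lcoeff l r ^ k1 r) * (\<Prod>r\<in>{0..R}. lcoeff l r ^ k2 r)))"

lemma telescope_factorials:
  fixes N FM FN1 FA FB PK P1 P2 F s LK C1 C2 :: "'a::field"
  assumes "N \<noteq> 0" "FM \<noteq> 0" "FN1 \<noteq> 0" "FA \<noteq> 0" "FB \<noteq> 0" "PK \<noteq> 0" "P1 \<noteq> 0" "P2 \<noteq> 0"
  shows "(1/N) * ((s * (F/(FM*FN1))) * ((FM/PK) * LK)) * (((N*FN1)/(FA*FB)) * ((FA/P1) * C1) * ((FB/P2) * C2))
       = s * (F/(PK*P1*P2)) * (LK*C1*C2)"
  using assms by (simp add: field_simps)

lemma raw_term_eq_clean_term: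
  fixes l :: "nat \<Rightarrow> 'a::field_char_0"
  assumes "mass R k1 + mass R k2 \<ge> 1"
  shows "raw_term l R (mass R k1 + mass R k2) (K, k1, k2) = clean_term l R (K, k1, k2)"
proof -
  define a b m where "a = mass R k1" and "b = mass R k2" and "m = mass1 R K"
  define n where "n = a + b"
  define PK P1 P2 where "PK = (\<Prod>r\<in>{1..R}. fact (K r) :: 'a)"
    and "P1 = (\<Prod>r\<in>{0..R}. fact (k1 r) :: 'a)" and "P2 = (\<Prod>r\<in>{0..R}. fact (k2 r) :: 'a)"
  define LK C1 C2 where "LK = (\<Prod>r\<in>{1..R}. l r ^ K r)"
    and "C1 = (\<Prod>r\<in>{0..R}. lcoeff l r ^ k1 r)" and "C2 = (\<Prod>r\<in>{0..R}. lcoeff l r ^ k2 r)"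
  have n1: "n \<ge> 1" using assms by (simp add: n_def a_def b_def)
  have mK: "(of_nat (multinom {1..R} K) :: 'a) = fact m / PK"
    by (simp add: of_nat_multinom m_def mass1_def PK_def)
  have m1: "(of_nat (multinom {0..R} k1) :: 'a) = fact a / P1"
    by (simp add: of_nat_multinom a_def mass_def P1_def)
  have m2: "(of_nat (multinom {0..R} k2) :: 'a) = fact b / P2"
    by (simp add: of_nat_multinom b_def mass_def P2_def)
  have ch: "(of_nat (n choose a) :: 'a) = fact n / (fact a * fact b)"
    by (simp add: n_def binomial_fact)
  have fn: "(fact n :: 'a) = of_nat n * fact (n - 1)" using n1 by (simp add: fact_reduce)
  have gc: "((- of_nat n) gchoose m :: 'a) = (-1) ^ m * (fact (n + m - 1) / (fact m * fact (n - 1)))"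
    by (rule gbinomial_neg_of_nat[OF n1])
  have "raw_term l R n (K, k1, k2) = (1 / of_nat n) * (((- of_nat n) gchoose m) * (of_nat (multinom {1..R} K) * LK)) *
      (of_nat (n choose a) * (of_nat (multinom {0..R} k1) * C1) * (of_nat (multinom {0..R} k2) * C2))"
    unfolding raw_term_def mono_coeff1_def mono_coeff_def case_prod_conv
      m_def[symmetric] a_def[symmetric] LK_def C1_def C2_def ..
  also have "\<dots> = (1 / of_nat n) * (((-1) ^ m * (fact (n + m - 1) / (fact m * fact (n - 1)))) * ((fact m / PK) * LK)) *
      (((of_nat n * fact (n - 1)) / (fact a * fact b)) * ((fact a / P1) * C1) * ((fact b / P2) * C2))"
    unfolding gc mK m1 m2 ch fn ..
  also have "\<dots> = (-1) ^ m * (fact (n + m - 1) / (PK * P1 * P2)) * (LK * C1 * C2)"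
    by (rule telescope_factorials) (use n1 in \<open>simp_all add: PK_def P1_def P2_def\<close>)
  also have "\<dots> = clean_term l R (K, k1, k2)"
    unfolding clean_term_def case_prod_conv a_def[symmetric] b_def[symmetric] n_def[symmetric]
      m_def[symmetric] PK_def P1_def P2_def LK_def C1_def C2_def ..
  finally show ?thesis by (simp only: n_def a_def b_def)
qed

section \<open>Reindexing to the sum of the theorem\<close>

text \<open>A multi-index on {0..R} is split into its value at position 0 and a multi-index on
  {1..R}.  In this form the triples (K, k1, k2) become tuples (i0, j0, I, J, K) with
  k1 = I(0 := i0) and k2 = J(0 := j0), and these are grouped by nu = I + J + K.\<close>

type_synonym index5 = "nat \<times> nat \<times> (nat \<Rightarrow> nat) \<times> (nat \<Rightarrow> nat) \<times> (nat \<Rightarrow> nat)"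

definition flat_index :: "nat \<Rightarrow> nat \<Rightarrow> nat \<Rightarrow> nat \<Rightarrow> index5 set" where
  "flat_index p R i j = {(i0, j0, I, J, K).
     I \<in> supp_in {1..R} \<and> J \<in> supp_in {1..R} \<and> K \<in> supp_in {1..R} \<and>
     excess p R I + excess p R J + excess p R K = i + j - 1 \<and>
     i0 + (\<Sum>r\<in>{1..R}. p ^ r * I r) = i \<and> j0 + (\<Sum>r\<in>{1..R}. p ^ r * J r) = j}"

lemma atLeast0_insert: "{0..R} = insert 0 {1..(R::nat)}"
  by auto

lemma sum_upd0: "(\<Sum>r\<in>{0..R::nat}. f r ((I(0 := a)) r)) = f 0 a + (\<Sum>r\<in>{1..R}. f r (I r))"
proof -
  have "(\<Sum>r\<in>{1..R}. f r ((I(0 := a)) r)) = (\<Sum>r\<in>{1..R}. f r (I r))" by (rule sum.cong) auto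
  then show ?thesis unfolding atLeast0_insert by simp
qed

lemma prod_upd0: "(\<Prod>r\<in>{0..R::nat}. f r ((I(0 := a)) r)) = f 0 a * (\<Prod>r\<in>{1..R}. f r (I r))"
proof -
  have "(\<Prod>r\<in>{1..R}. f r ((I(0 := a)) r)) = (\<Prod>r\<in>{1..R}. f r (I r))" by (rule prod.cong) auto
  then show ?thesis unfolding atLeast0_insert by simp
qed

lemma mass_upd0: "mass R (I(0 := a)) = a + mass1 R I"
  unfolding mass_def mass1_def by (rule sum_upd0[where f = "\<lambda>r x. x"])

text \<open>Writing p^r = 1 + (p^r - 1) splits a digit sum into size and excess.\<close>

lemma digit_sum_split:
  assumes "p \<ge> 1" shows "(\<Sum>r\<in>{1..R}. p ^ r * I r) = mass1 R I + excess p R I"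
proof -
  have "p ^ r * I r = I r + (p ^ r - 1) * I r" for r
    using assms by (simp add: diff_mult_distrib)
  then show ?thesis by (simp add: mass1_def excess_def sum.distrib)
qed

lemma digit_sum_upd0:
  assumes "p \<ge> 1"
  shows "(\<Sum>r\<in>{0..R}. p ^ r * (I(0 := a)) r) = a + mass1 R I + excess p R I"
  unfolding sum_upd0[where f = "\<lambda>r x. p ^ r * x"] digit_sum_split[OF assms] by simp

lemma excess_eq_0: "mass1 R I = 0 \<Longrightarrow> excess p R I = 0"
  by (simp add: mass1_def excess_def)

lemma excess_add:
  "excess p R (\<lambda>r. I r + J r + K r) = excess p R I + excess p R J + excess p R K"
  by (simp add: excess_def sum.distrib distrib_left)

text \<open>The conditions on (K, k1, k2) and on (i0, j0, I, J, K) are equivalent; the degree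
  condition K \<in> weight_reps n becomes the excess condition of the theorem.\<close>

lemma raw_flat_iff:
  assumes p: "p \<ge> 1" and ij: "i + j \<ge> 1"
    and I: "I \<in> supp_in {1..R}" and J: "J \<in> supp_in {1..R}" and K: "K \<in> supp_in {1..R}"
  shows "(K, I(0 := i0), J(0 := j0)) \<in> raw_index p R i j \<longleftrightarrow> (i0, j0, I, J, K) \<in> flat_index p R i j"
proof -
  define n where "n = i0 + mass1 R I + (j0 + mass1 R J)"
  have supp: "I(0 := i0) \<in> supp_in {0..R}" "J(0 := j0) \<in> supp_in {0..R}"
    using I J by (auto simp: supp_in_def)
  have raw: "(K, I(0 := i0), J(0 := j0)) \<in> raw_index p R i j \<longleftrightarrow> 1 \<le> n \<and> excess p R K = n - 1
      \<and> i0 + mass1 R I + excess p R I = i \<and> j0 + mass1 R J + excess p R J = j"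
    unfolding raw_index_def raw_order_def weight_reps_def digit_reps_def mem_Collect_eq case_prod_conv
      mass_upd0 digit_sum_upd0[OF p] n_def[symmetric]
    using K supp by auto
  have flat: "(i0, j0, I, J, K) \<in> flat_index p R i j \<longleftrightarrow>
      excess p R I + excess p R J + excess p R K = i + j - 1
      \<and> i0 + mass1 R I + excess p R I = i \<and> j0 + mass1 R J + excess p R J = j"
    unfolding flat_index_def mem_Collect_eq case_prod_conv digit_sum_split[OF p] add.assoc
    using I J K by auto
  have "1 \<le> n" if "i0 + mass1 R I + excess p R I = i" "j0 + mass1 R J + excess p R J = j"
  proof (rule ccontr)
    assume "\<not> 1 \<le> n"
    then have "i0 = 0" "j0 = 0" "mass1 R I = 0" "mass1 R J = 0" by (simp_all add: n_def)
    then show False using that ij excess_eq_0[of R I p] excess_eq_0[of R J p] by simp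
  qed
  then show ?thesis unfolding raw flat n_def by auto
qed

definition nu_of :: "index5 \<Rightarrow> nat \<Rightarrow> nat" where
  "nu_of = (\<lambda>(i0, j0, I, J, K) r. I r + J r + K r)"

definition target_term :: "(nat \<Rightarrow> 'a::field_char_0) \<Rightarrow> (nat \<Rightarrow> nat) \<Rightarrow> index5 \<Rightarrow> 'a" where
  "target_term l \<nu> = (\<lambda>(i0, j0, I, J, K).
     (-1) ^ (\<Sum>r\<in>{r. \<nu> r \<noteq> 0}. K r) *
     (fact (i0 + j0 + (\<Sum>r\<in>{r. \<nu> r \<noteq> 0}. I r + J r + K r) - 1) /
      (fact i0 * fact j0 * (\<Prod>r\<in>{r. \<nu> r \<noteq> 0}. fact (I r) * fact (J r) * fact (K r))))
     * (\<Prod>r\<in>{r. \<nu> r \<noteq> 0}. l r ^ \<nu> r))"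

lemma sum_over_support:
  assumes "finite B" "{r. \<nu> r \<noteq> 0} \<subseteq> B" "\<And>r. r \<in> B \<Longrightarrow> \<nu> r = (0::nat) \<Longrightarrow> f r = 0"
  shows "(\<Sum>r\<in>{r. \<nu> r \<noteq> 0}. f r) = (\<Sum>r\<in>B. f r)"
  by (rule sum.mono_neutral_left) (use assms in auto)

lemma prod_over_support:
  assumes "finite B" "{r. \<nu> r \<noteq> 0} \<subseteq> B" "\<And>r. r \<in> B \<Longrightarrow> \<nu> r = (0::nat) \<Longrightarrow> f r = 1"
  shows "(\<Prod>r\<in>{r. \<nu> r \<noteq> 0}. f r) = (\<Prod>r\<in>B. f r)"
  by (rule prod.mono_neutral_left) (use assms in auto)

lemma clean_term_eq_target_term:
  fixes l :: "nat \<Rightarrow> 'a::field_char_0"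
  assumes "I \<in> supp_in {1..R}" "J \<in> supp_in {1..R}" "K \<in> supp_in {1..R}"
  shows "clean_term l R (K, I(0 := i0), J(0 := j0)) = target_term l (nu_of (i0, j0, I, J, K)) (i0, j0, I, J, K)"
proof -
  let ?v = "\<lambda>r. I r + J r + K r"
  have supp: "{r. ?v r \<noteq> 0} \<subseteq> {1..R}" using assms by (auto simp: supp_in_def)
  have "(\<Sum>r\<in>{r. ?v r \<noteq> 0}. K r) = mass1 R K"
    unfolding mass1_def by (rule sum_over_support[OF _ supp]) auto
  moreover have "(\<Sum>r\<in>{r. ?v r \<noteq> 0}. I r + J r + K r) = mass1 R I + mass1 R J + mass1 R K"
    unfolding mass1_def by (subst sum_over_support[OF _ supp]) (auto simp: sum.distrib)
  moreover have "(\<Prod>r\<in>{r. ?v r \<noteq> 0}. fact (I r) * fact (J r) * fact (K r)) =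
      (\<Prod>r\<in>{1..R}. fact (I r)) * (\<Prod>r\<in>{1..R}. fact (J r)) * (\<Prod>r\<in>{1..R}. fact (K r) :: 'a)"
    by (subst prod_over_support[OF _ supp]) (auto simp: prod.distrib)
  moreover have "(\<Prod>r\<in>{r. ?v r \<noteq> 0}. l r ^ ?v r) =
      (\<Prod>r\<in>{1..R}. l r ^ I r) * (\<Prod>r\<in>{1..R}. l r ^ J r) * (\<Prod>r\<in>{1..R}. l r ^ K r)"
    by (subst prod_over_support[OF _ supp]) (auto simp: prod.distrib power_add)
  moreover have "(\<Prod>r\<in>{1..R}. lcoeff l r ^ I' r) = (\<Prod>r\<in>{1..R}. l r ^ I' r)" for I'
    by (rule prod.cong) (auto simp: lcoeff_def)
  ultimately show ?thesis
    unfolding clean_term_def target_term_def nu_of_def case_prod_conv mass_upd0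
      prod_upd0[where f = "\<lambda>r x. fact x"] prod_upd0[where f = "\<lambda>r x. lcoeff l r ^ x"]
    by (simp add: lcoeff_def ac_simps)
qed

lemma flat_raw_reindex:
  fixes l :: "nat \<Rightarrow> 'a::field_char_0"
  assumes p2: "p \<ge> 2" and ij: "i + j \<ge> 1"
  shows "(\<Sum>x\<in>raw_index p R i j. clean_term l R x) = (\<Sum>t\<in>flat_index p R i j. target_term l (nu_of t) t)"
proof (rule sum.reindex_bij_witness[where j = "\<lambda>(K, k1, k2). (k1 0, k2 0, k1(0 := 0), k2(0 := 0), K)"
      and i = "\<lambda>(i0, j0, I, J, K). (K, I(0 := i0), J(0 := j0))"])
  have p: "p \<ge> 1" using p2 by simp
  have zero: "I \<in> supp_in {1..R} \<Longrightarrow> I 0 = 0" for I by (simp add: supp_in_def)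
  {
    fix x assume x: "x \<in> raw_index p R i j"
    obtain K k1 k2 where xe: "x = (K, k1, k2)" by (cases x)
    have "K \<in> supp_in {1..R}" "k1(0 := 0) \<in> supp_in {1..R}" "k2(0 := 0) \<in> supp_in {1..R}"
      using x xe by (auto simp: raw_index_def weight_reps_def digit_reps_def supp_in_def)
    note IJK = this
    have xs: "x = (K, (k1(0 := 0))(0 := k1 0), (k2(0 := 0))(0 := k2 0))" using xe by simp
    show "(case (case x of (K, k1, k2) \<Rightarrow> (k1 0, k2 0, k1(0 := 0), k2(0 := 0), K)) of
        (i0, j0, I, J, K) \<Rightarrow> (K, I(0 := i0), J(0 := j0))) = x"
      using xe by simp
    show "(case x of (K, k1, k2) \<Rightarrow> (k1 0, k2 0, k1(0 := 0), k2(0 := 0), K)) \<in> flat_index p R i j"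
      using x raw_flat_iff[OF p ij IJK(2,3,1), of "k1 0" "k2 0"] xe by simp
    show "target_term l (nu_of (case x of (K, k1, k2) \<Rightarrow> (k1 0, k2 0, k1(0 := 0), k2(0 := 0), K)))
          (case x of (K, k1, k2) \<Rightarrow> (k1 0, k2 0, k1(0 := 0), k2(0 := 0), K)) = clean_term l R x"
      using clean_term_eq_target_term[OF IJK(2,3,1), of l "k1 0" "k2 0"] xs xe by simp
  next
    fix t assume t: "t \<in> flat_index p R i j"
    obtain i0 j0 I J K where te: "t = (i0, j0, I, J, K)" by (cases t rule: prod_cases5)
    have IJK: "I \<in> supp_in {1..R}" "J \<in> supp_in {1..R}" "K \<in> supp_in {1..R}"
      using t te by (auto simp: flat_index_def)
    show "(case (case t of (i0, j0, I, J, K) \<Rightarrow> (K, I(0 := i0), J(0 := j0))) of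
        (K, k1, k2) \<Rightarrow> (k1 0, k2 0, k1(0 := 0), k2(0 := 0), K)) = t"
      using te zero[OF IJK(1)] zero[OF IJK(2)] by (auto simp: fun_eq_iff)
    show "(case t of (i0, j0, I, J, K) \<Rightarrow> (K, I(0 := i0), J(0 := j0))) \<in> raw_index p R i j"
      using t te raw_flat_iff[OF p ij IJK] by simp
  }
qed

definition nu_set :: "nat \<Rightarrow> nat \<Rightarrow> nat \<Rightarrow> (nat \<Rightarrow> nat) set" where
  "nu_set p i j = {\<nu>. \<nu> 0 = 0 \<and> finite {r. \<nu> r \<noteq> 0} \<and>
              (\<Sum>r\<in>{r. \<nu> r \<noteq> 0}. (p ^ r - 1) * \<nu> r) = i + j - 1}"

definition fiber :: "nat \<Rightarrow> nat \<Rightarrow> nat \<Rightarrow> (nat \<Rightarrow> nat) \<Rightarrow> index5 set" where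
  "fiber p i j \<nu> = {(i0, j0, I, J, K).
            I 0 = 0 \<and> J 0 = 0 \<and> K 0 = 0 \<and>
            (\<forall>r\<ge>1. I r + J r + K r = \<nu> r) \<and>
            i0 + (\<Sum>r\<in>{r. \<nu> r \<noteq> 0}. p ^ r * I r) = i \<and>
            j0 + (\<Sum>r\<in>{r. \<nu> r \<noteq> 0}. p ^ r * J r) = j}"

text \<open>Since r < p^r - 1 + 1, every nu in nu_set is supported in {1..i+j}.\<close>

lemma nu_set_supp:
  assumes p2: "p \<ge> 2" and v: "\<nu> \<in> nu_set p i j"
  shows "{r. \<nu> r \<noteq> 0} \<subseteq> {1..i+j}"
proof
  fix r assume r: "r \<in> {r. \<nu> r \<noteq> 0}"
  have "r \<le> p ^ r - 1" using r_less_pow[OF p2, of r] by simp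
  also have "\<dots> \<le> (p ^ r - 1) * \<nu> r" using r by simp
  also have "\<dots> \<le> (\<Sum>r\<in>{r. \<nu> r \<noteq> 0}. (p ^ r - 1) * \<nu> r)"
    using v r by (intro member_le_sum) (auto simp: nu_set_def)
  finally show "r \<in> {1..i+j}" using v r by (cases "r = 0") (auto simp: nu_set_def)
qed

lemma nu_set_excess:
  assumes p2: "p \<ge> 2" and v: "\<nu> \<in> nu_set p i j"
  shows "excess p (i + j) \<nu> = i + j - 1"
  using v sum_over_support[OF _ nu_set_supp[OF p2 v], of "\<lambda>r. (p ^ r - 1) * \<nu> r"]
  by (simp add: excess_def nu_set_def)

lemma finite_nu_set:
  assumes p2: "p \<ge> 2" shows "finite (nu_set p i j)"
proof (rule finite_subset)
  show "nu_set p i j \<subseteq> {\<nu> \<in> supp_in {1..i+j}. (\<Sum>r\<in>{1..i+j}. (p ^ r - 1) * \<nu> r) \<le> i + j}"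
    using nu_set_supp[OF p2] nu_set_excess[OF p2] by (fastforce simp: supp_in_def excess_def)
  show "finite {\<nu> \<in> supp_in {1..i+j}. (\<Sum>r\<in>{1..i+j}. (p ^ r - 1) * \<nu> r) \<le> i + j}"
    by (rule finite_weighted_bounded) (use pow_minus_one_ge1[OF p2] in auto)
qed

lemma finite_flat_index:
  assumes p2: "p \<ge> 2" shows "finite (flat_index p R i j)"
proof (rule finite_subset)
  let ?B1 = "{f \<in> supp_in {1..R}. (\<Sum>r\<in>{1..R}. p ^ r * f r) \<le> i + j}"
  let ?B2 = "{f \<in> supp_in {1..R}. (\<Sum>r\<in>{1..R}. (p ^ r - 1) * f r) \<le> i + j}"
  show "flat_index p R i j \<subseteq> {..i} \<times> {..j} \<times> ?B1 \<times> ?B1 \<times> ?B2"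
    by (auto simp: flat_index_def excess_def)
  have "finite ?B1" using p2 by (intro finite_weighted_bounded) simp_all
  moreover have "finite ?B2" by (rule finite_weighted_bounded) (use pow_minus_one_ge1[OF p2] in auto)
  ultimately show "finite ({..i} \<times> {..j} \<times> ?B1 \<times> ?B1 \<times> ?B2)" by simp
qed

lemma nu_of_flat_index:
  assumes t: "(i0, j0, I, J, K) \<in> flat_index p R i j"
  shows "nu_of (i0, j0, I, J, K) \<in> nu_set p i j"
proof -
  let ?v = "\<lambda>r. I r + J r + K r"
  have supp: "{r. ?v r \<noteq> 0} \<subseteq> {1..R}" using t by (auto simp: flat_index_def supp_in_def)
  have "(\<Sum>r\<in>{r. ?v r \<noteq> 0}. (p ^ r - 1) * ?v r) = excess p R ?v"
    unfolding excess_def by (rule sum_over_support[OF _ supp]) auto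
  then show ?thesis
    using t supp finite_subset[OF supp] by (auto simp: nu_set_def nu_of_def flat_index_def excess_add supp_in_def)
qed

text \<open>If I + J + K = nu with nu in nu_set, the conditions of fiber nu and of flat_index agree:
  the supports of I, J, K lie in {1..R} and sums over the support of nu are sums over {1..R}.\<close>

lemma fiber_iff_flat_index:
  assumes p2: "p \<ge> 2" and R: "R = i + j" and v: "\<nu> \<in> nu_set p i j"
    and IJK: "(\<lambda>r. I r + J r + K r) = \<nu>"
  shows "(i0, j0, I, J, K) \<in> fiber p i j \<nu> \<longleftrightarrow> (i0, j0, I, J, K) \<in> flat_index p R i j"
proof -
  have supp: "{r. \<nu> r \<noteq> 0} \<subseteq> {1..R}" using nu_set_supp[OF p2 v] R by simp
  have vr: "I r + J r + K r = \<nu> r" for r using IJK by (simp add: fun_eq_iff)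
  have zero: "I r = 0 \<and> J r = 0 \<and> K r = 0" if "r \<notin> {1..R}" for r
  proof -
    have "\<nu> r = 0" using supp that by blast
    then show ?thesis using vr[of r] by simp
  qed
  then have supps: "I \<in> supp_in {1..R}" "J \<in> supp_in {1..R}" "K \<in> supp_in {1..R}"
    by (simp_all add: supp_in_def)
  have "excess p R I + excess p R J + excess p R K = i + j - 1"
    using nu_set_excess[OF p2 v] R by (simp add: IJK[symmetric] excess_add)
  moreover have "(\<Sum>r\<in>{r. \<nu> r \<noteq> 0}. p ^ r * I r) = (\<Sum>r\<in>{1..R}. p ^ r * I r)"
  proof (rule sum_over_support[OF _ supp])
    show "p ^ r * I r = 0" if "\<nu> r = 0" for r using that vr[of r] by simp
  qed simp
  moreover have "(\<Sum>r\<in>{r. \<nu> r \<noteq> 0}. p ^ r * J r) = (\<Sum>r\<in>{1..R}. p ^ r * J r)"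
  proof (rule sum_over_support[OF _ supp])
    show "p ^ r * J r = 0" if "\<nu> r = 0" for r using that vr[of r] by simp
  qed simp
  moreover have "I 0 = 0" "J 0 = 0" "K 0 = 0" using zero[of 0] by simp_all
  ultimately show ?thesis
    unfolding fiber_def flat_index_def mem_Collect_eq case_prod_conv using supps vr by simp
qed

lemma fiber_eq:
  assumes p2: "p \<ge> 2" and R: "R = i + j" and v: "\<nu> \<in> nu_set p i j"
  shows "fiber p i j \<nu> = {t \<in> flat_index p R i j. nu_of t = \<nu>}"
proof (intro set_eqI)
  fix t :: index5
  obtain i0 j0 I J K where te: "t = (i0, j0, I, J, K)" by (cases t rule: prod_cases5)
  have v0: "\<nu> 0 = 0" using v by (simp add: nu_set_def)
  have "(\<lambda>r. I r + J r + K r) = \<nu>" if "t \<in> fiber p i j \<nu>"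
  proof
    fix r show "I r + J r + K r = \<nu> r"
      using that te v0 by (cases "r = 0") (auto simp: fiber_def)
  qed
  then show "t \<in> fiber p i j \<nu> \<longleftrightarrow> t \<in> {t \<in> flat_index p R i j. nu_of t = \<nu>}"
    using fiber_iff_flat_index[OF p2 R v] te by (auto simp: nu_of_def)
qed

lemma target_regroup:
  fixes l :: "nat \<Rightarrow> 'a::field_char_0"
  assumes p2: "p \<ge> 2" and R: "R = i + j"
  shows "(\<Sum>\<nu>\<in>nu_set p i j. \<Sum>t\<in>fiber p i j \<nu>. target_term l \<nu> t)
       = (\<Sum>t\<in>flat_index p R i j. target_term l (nu_of t) t)"
proof (rule sum_group_eq)
  show "nu_of ` flat_index p R i j \<subseteq> nu_set p i j"
    using nu_of_flat_index by (force simp: flat_index_def)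
qed (use finite_flat_index[OF p2] finite_nu_set[OF p2] fiber_eq[OF p2 R] in auto)

text \<open>Every p^r - 1 is divisible by p - 1, hence so is i + j - 1 whenever nu_set is nonempty.\<close>

lemma nu_set_empty:
  assumes nd: "\<not> (p - 1) dvd (i + j - 1)"
  shows "nu_set p i j = {}"
proof -
  have "(p - 1) dvd (p ^ r - 1)" for r
  proof (cases "p = 0")
    case False
    then show ?thesis
    proof (induction r)
      case (Suc r)
      have "p ^ Suc r - 1 = p * (p ^ r - 1) + (p - 1)"
        using Suc.prems by (simp add: diff_mult_distrib2 algebra_simps)
      moreover have "(p - 1) dvd p * (p ^ r - 1) + (p - 1)"
        using Suc by (intro dvd_add dvd_mult) simp_all
      ultimately show ?case by simp
    qed simp
  qed (simp add: power_0_left)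
  then have dv: "(p - 1) dvd (\<Sum>r\<in>{r. \<nu> r \<noteq> 0}. (p ^ r - 1) * \<nu> r)" for \<nu>
    by (intro dvd_sum dvd_mult2)
  have "(p - 1) dvd (i + j - 1)" if "\<nu> \<in> nu_set p i j" for \<nu>
    using dv[of \<nu>] that unfolding nu_set_def by auto
  then show ?thesis using nd by blast
qed

theorem proposition2p2:
  fixes p :: nat and l :: "nat \<Rightarrow> 'a::field_char_0" and i j :: nat
  assumes "prime p" and "i + j \<ge> 1"
  shows "FBP_coeff p l i j =
    (\<Sum>\<nu>\<in>{\<nu>. \<nu> 0 = 0 \<and> finite {r. \<nu> r \<noteq> 0} \<and>
              (\<Sum>r\<in>{r. \<nu> r \<noteq> 0}. (p ^ r - 1) * \<nu> r) = i + j - 1}.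
      (\<Sum>(i0, j0, I, J, K)\<in>{(i0, j0, I, J, K).
            I 0 = 0 \<and> J 0 = 0 \<and> K 0 = 0 \<and>
            (\<forall>r\<ge>1. I r + J r + K r = \<nu> r) \<and>
            i0 + (\<Sum>r\<in>{r. \<nu> r \<noteq> 0}. p ^ r * I r) = i \<and>
            j0 + (\<Sum>r\<in>{r. \<nu> r \<noteq> 0}. p ^ r * J r) = j}.
         (-1) ^ (\<Sum>r\<in>{r. \<nu> r \<noteq> 0}. K r) *
         (fact (i0 + j0 + (\<Sum>r\<in>{r. \<nu> r \<noteq> 0}. I r + J r + K r) - 1) /
          (fact i0 * fact j0 * (\<Prod>r\<in>{r. \<nu> r \<noteq> 0}. fact (I r) * fact (J r) * fact (K r))))
         * (\<Prod>r\<in>{r. \<nu> r \<noteq> 0}. l r ^ \<nu> r)))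
   \<and> (\<not> (p - 1) dvd (i + j - 1) \<longrightarrow> FBP_coeff p l i j = 0)"
proof -
  have p2: "p \<ge> 2" using assms(1) by (simp add: prime_ge_2_nat)
  define R where "R = i + j"
  have "FBP_coeff p l i j = (\<Sum>x\<in>raw_index p R i j. raw_term l R (raw_order R x) x)"
    by (rule FBP_coeff_raw_sum[OF p2 R_def])
  also have "\<dots> = (\<Sum>x\<in>raw_index p R i j. clean_term l R x)"
    by (intro sum.cong refl) (auto simp: raw_index_def raw_order_def raw_term_eq_clean_term)
  also have "\<dots> = (\<Sum>t\<in>flat_index p R i j. target_term l (nu_of t) t)"
    by (rule flat_raw_reindex[OF p2 assms(2)])
  also have "\<dots> = (\<Sum>\<nu>\<in>nu_set p i j. \<Sum>t\<in>fiber p i j \<nu>. target_term l \<nu> t)"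
    by (rule target_regroup[OF p2 R_def, symmetric])
  finally have "FBP_coeff p l i j = (\<Sum>\<nu>\<in>nu_set p i j. \<Sum>t\<in>fiber p i j \<nu>. target_term l \<nu> t)" .
  then show ?thesis
    unfolding nu_set_def[symmetric] fiber_def[symmetric] target_term_def[symmetric]
    using nu_set_empty by simp
qed

end
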